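(* Let $m,n,p\ge1$, $B\in\mathbb{R}^{m\times n}$, let $J:\mathbb{R}^p\to\mathbb{R}^{m\times n}$ be linear with adjoint $J^*$ and $J^*J$ invertible, and let $\lambda>0$. Consider the problem $$\min_{X,E,\Delta\tau}\big\{\|X\|_*+\lambda\|E\|_1:\ B+J\Delta\tau=X+E\big\}\qquad (P)$$ over $X,E\in\mathbb{R}^{m\times n}$, $\Delta\tau\in\mathbb{R}^p$. Fix $\sigma>0$ and $\xi\in(0,(1+\sqrt5)/2)$, a starting point $(X^0,\Delta\tau^0,E^0,Y^0)$, and generate for $k=0,1,\dots$ (sGS-ADMM): 1. $X^{k+1}=\mathcal{D}_{1/\sigma}(B+J\Delta\tau^k-E^k+Y^k/\sigma)$; 2. $\Delta\tau^{k+1/2}=-(J^*J)^{-1}[J^*(B-X^{k+1}-E^k)+J^*Y^k/\sigma]$; 3. $E^{k+1}=\mathcal{S}_{\lambda/\sigma}(B+J\Delta\tau^{k+1/2}-X^{k+1}+Y^k/\sigma)$; 4. $\Delta\tau^{k+1}=-(J^*J)^{-1}[J^*(B-X^{k+1}-E^{k+1})+J^*Y^k/\sigma]$; 5. $Y^{k+1}=Y^k+\xi\sigma(B+J\Delta\tau^{k+1}-X^{k+1}-E^{k+1})$. Then the sequence $\{(X^k,\Delta\tau^k,E^k,Y^k)\}$ converges to a limit $(\bar X,\Delta\bar\tau,\bar E,\bar Y)$ such that $(\bar X,\Delta\bar\tau,\bar E)$ is an optimal solution of $(P)$.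
   Context: $\|X\|_*$ is the nuclear norm, $\|E\|_1$ the entrywise $\ell_1$ norm, $\|\cdot\|_F$ the Frobenius norm. For $\mu>0$, $\mathcal{D}_\mu(X)=\operatorname{argmin}_Y\{\|Y\|_*+\frac1{2\mu}\|Y-X\|_F^2\}=U\,\mathrm{diag}(\max\{\sigma_i-\mu,0\})V^\top$ where $X=U\,\mathrm{diag}(\sigma_i)V^\top$ is an SVD (singular value thresholding), and $\mathcal{S}_\mu(X)$ is the entrywise soft-thresholding $[\mathcal{S}_\mu(X)]_{ij}=\mathrm{sgn}(X_{ij})\max\{|X_{ij}|-\mu,0\}$. In the application $B=D\circ\tau$ is the current (normalized) transformed image and $J$ its Jacobian with respect to the transform parameters. *)

theory Defs
  imports "HOL-Analysis.Analysis"
begin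

text \<open>Matrices in R^(m x n) are represented as real^'n^'m (row index 'm, column index 'n).
The Frobenius norm is the library norm on this type and the Frobenius inner product
is the library inner product.\<close>

text \<open>Singular value decomposition X = U S V^T, with U, V orthogonal and S a
nonnegative rectangular "diagonal" matrix: every row and every column of S has at
most one nonzero entry (a diagonal up to a permutation of the index sets, which
are finite types without a canonical order).\<close>
definition is_svd :: "real^'n^'m \<Rightarrow> real^'m^'m \<Rightarrow> real^'n^'m \<Rightarrow> real^'n^'n \<Rightarrow> bool" where
  "is_svd X U S V \<longleftrightarrow> orthogonal_matrix U \<and> orthogonal_matrix V \<and>
     (\<forall>i j. S$i$j \<ge> 0) \<and>
     (\<forall>i j j'. S$i$j \<noteq> 0 \<longrightarrow> S$i$j' \<noteq> 0 \<longrightarrow> j = j') \<and>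
     (\<forall>i i' j. S$i$j \<noteq> 0 \<longrightarrow> S$i'$j \<noteq> 0 \<longrightarrow> i = i') \<and>
     X = U ** S ** transpose V"

definition nuc_norm :: "real^'n^'m \<Rightarrow> real" where
  "nuc_norm X = (SOME s. \<exists>U S V. is_svd X U S V \<and> s = (\<Sum>i\<in>UNIV. \<Sum>j\<in>UNIV. S$i$j))"

definition l1_norm :: "real^'n^'m \<Rightarrow> real" where
  "l1_norm E = (\<Sum>i\<in>UNIV. \<Sum>j\<in>UNIV. \<bar>E$i$j\<bar>)"

text \<open>Singular value thresholding, as the proximal map of the nuclear norm.\<close>
definition svt :: "real \<Rightarrow> real^'n^'m \<Rightarrow> real^'n^'m" where
  "svt \<mu> X = (THE Y. \<forall>Z. nuc_norm Y + (1 / (2*\<mu>)) * (norm (Y - X))\<^sup>2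
                          \<le> nuc_norm Z + (1 / (2*\<mu>)) * (norm (Z - X))\<^sup>2)"

definition soft :: "real \<Rightarrow> real^'n^'m \<Rightarrow> real^'n^'m" where
  "soft \<mu> X = (\<chi> i j. sgn (X$i$j) * max (\<bar>X$i$j\<bar> - \<mu>) 0)"

definition optimal_P ::
  "real^'n^'m \<Rightarrow> (real^'p \<Rightarrow> real^'n^'m) \<Rightarrow> real \<Rightarrow> real^'n^'m \<Rightarrow> real^'p \<Rightarrow> real^'n^'m \<Rightarrow> bool" where
  "optimal_P B J lam X dt E \<longleftrightarrow> B + J dt = X + E \<and>
     (\<forall>X' dt' E'. B + J dt' = X' + E' \<longrightarrow> nuc_norm X + lam * l1_norm E \<le> nuc_norm X' + lam * l1_norm E')"

end

(*
  The iteration is analysed only through the optimality conditions of its subproblems: singular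
  value thresholding and soft thresholding are the proximal maps of the nuclear norm and of the
  l1 norm, and the two Delta-tau steps make the multiplier orthogonal to the range of J.

  A KKT point exists by a quadratic penalty argument, using that the nuclear norm (the support
  function of the contractions, by the SVD) is coercive and that the l1 norm has bounded
  subgradients. Around a KKT point, monotonicity of the two subdifferentials gives a Lyapunov
  function that decreases by a positive multiple of the squared residuals as long as
  xi < (1 + sqrt 5)/2. Hence the residuals are square summable and the iterates bounded; a
  cluster point is again a KKT point, and the Lyapunov function centred there tends to 0 along
  the whole sequence, which forces convergence. A KKT point solves (P).
*)

theory Submission
  imports Defs
begin

section \<open>Spectral theorem and singular value decomposition\<close>

lemma inner_symmetric_matrix_vector_mult:
  fixes A :: "real^'n^'n"
  assumes "transpose A = A"
  shows "x \<bullet> (A *v y) = (A *v x) \<bullet> y"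
proof -
  have "x \<bullet> (A *v y) = (x v* A) \<bullet> y" by (simp add: dot_lmul_matrix)
  also have "x v* A = transpose A *v x" by simp
  finally show ?thesis using assms by simp
qed

lemma quadratic_nonpos_imp_linear_coeff_zero:
  fixes c d :: real
  assumes "\<And>t. 2*t*c + t^2*d \<le> 0"
  shows "c = 0"
proof -
  define t where "t = c / (\<bar>d\<bar> + 1)"
  have pos: "\<bar>d\<bar> + 1 > 0" by simp
  have "(2*t*c + t^2*d) * (\<bar>d\<bar> + 1)^2 \<le> 0"
    using assms[of t] by (simp add: mult_nonpos_nonneg)
  moreover have "(2*t*c + t^2*d) * (\<bar>d\<bar> + 1)^2 = c^2 * (2*\<bar>d\<bar> + 2 + d)"
  proof -
    have tD: "t * (\<bar>d\<bar> + 1) = c" using pos unfolding t_def by simp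
    have "(2*t*c + t^2*d) * (\<bar>d\<bar> + 1)^2 = 2*(t * (\<bar>d\<bar> + 1))*c*(\<bar>d\<bar> + 1) + (t * (\<bar>d\<bar> + 1))^2*d"
      by (simp add: power2_eq_square algebra_simps)
    then show ?thesis unfolding tD by (simp add: power2_eq_square algebra_simps)
  qed
  moreover have "2*\<bar>d\<bar> + 2 + d > 0" by linarith
  ultimately have "c^2 \<le> 0" by (simp add: mult_le_0_iff)
  then show ?thesis by simp
qed

lemma symmetric_matrix_argmax_eigenvector:
  fixes A :: "real^'n^'n"
  assumes sym: "transpose A = A" and S: "subspace S" and v: "v \<in> S" "norm v = 1"
    and inv: "\<And>x. x \<in> S \<Longrightarrow> A *v x \<in> S"
    and max: "\<And>y. y \<in> S \<Longrightarrow> norm y = 1 \<Longrightarrow> y \<bullet> (A *v y) \<le> v \<bullet> (A *v v)"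
  shows "A *v v = (v \<bullet> (A *v v)) *\<^sub>R v"
proof -
  define l where "l = v \<bullet> (A *v v)"
  have vv: "v \<bullet> v = 1" using v(2) by (simp add: norm_eq_1)
  have orth: "w \<bullet> (A *v v) = 0" if w: "w \<in> S" "v \<bullet> w = 0" for w
  proof (rule quadratic_nonpos_imp_linear_coeff_zero[where d = "w \<bullet> (A *v w) - l * (w \<bullet> w)"])
    fix t :: real
    define y where "y = v + t *\<^sub>R w"
    have yS: "y \<in> S" unfolding y_def using S v w by (simp add: subspace_add subspace_scale)
    have yy: "y \<bullet> y = 1 + t^2 * (w \<bullet> w)"
      unfolding y_def using vv w(2) by (simp add: inner_add inner_commute power2_eq_square algebra_simps)
    have ypos: "y \<bullet> y > 0" using yy by (simp add: add_pos_nonneg)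
    then have ny: "norm y > 0" by (simp add: norm_eq_sqrt_inner)
    define z where "z = (1 / norm y) *\<^sub>R y"
    have "z \<in> S" unfolding z_def using S yS by (simp add: subspace_scale)
    moreover have "norm z = 1" unfolding z_def using ny by simp
    ultimately have "z \<bullet> (A *v z) \<le> l" using max unfolding l_def by blast
    moreover have "z \<bullet> (A *v z) = (y \<bullet> (A *v y)) / (y \<bullet> y)"
      unfolding z_def using ny
      by (simp add: matrix_vector_mult_scaleR power2_norm_eq_inner[symmetric] power2_eq_square)
    ultimately have "y \<bullet> (A *v y) \<le> l * (y \<bullet> y)" using ypos by (simp add: divide_le_eq)
    moreover have "y \<bullet> (A *v y) = l + 2 * t * (w \<bullet> (A *v v)) + t^2 * (w \<bullet> (A *v w))"
    proof -
      have "v \<bullet> (A *v w) = w \<bullet> (A *v v)"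
        using inner_symmetric_matrix_vector_mult[OF sym, of v w] by (simp add: inner_commute)
      then show ?thesis unfolding y_def l_def
        by (simp add: matrix_vector_right_distrib matrix_vector_mult_scaleR inner_add
              power2_eq_square algebra_simps)
    qed
    ultimately show "2 * t * (w \<bullet> (A *v v)) + t^2 * (w \<bullet> (A *v w) - l * (w \<bullet> w)) \<le> 0"
      unfolding yy by (simp add: algebra_simps)
  qed
  define w where "w = A *v v - l *\<^sub>R v"
  have wS: "w \<in> S" unfolding w_def using S v inv by (simp add: subspace_diff subspace_scale)
  have vw: "v \<bullet> w = 0" unfolding w_def l_def using vv by (simp add: inner_diff_right)
  have "w \<bullet> w = 0"
    using orth[OF wS vw] vw unfolding w_def by (simp add: inner_diff_left inner_diff_right inner_commute)
  then show ?thesis unfolding w_def l_def by simp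
qed

lemma symmetric_matrix_invariant_subspace_eigenvector:
  fixes A :: "real^'n^'n"
  assumes sym: "transpose A = A" and S: "subspace S" "S \<noteq> {0}"
    and inv: "\<And>x. x \<in> S \<Longrightarrow> A *v x \<in> S"
  obtains v where "v \<in> S" "norm v = 1" "A *v v = (v \<bullet> (A *v v)) *\<^sub>R v"
proof -
  obtain x where x: "x \<in> S" "x \<noteq> 0" using S subspace_0 by blast
  define T where "T = S \<inter> sphere 0 1"
  have cT: "compact T" unfolding T_def
    using closed_subspace[OF S(1)] compact_sphere by (simp add: closed_Int_compact)
  have "(1 / norm x) *\<^sub>R x \<in> T" unfolding T_def using x S by (simp add: subspace_scale)
  then have neT: "T \<noteq> {}" by blast
  have "continuous_on T (\<lambda>y. y \<bullet> (A *v y))" by (intro continuous_intros)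
  then obtain v where vT: "v \<in> T" and max: "\<And>y. y \<in> T \<Longrightarrow> y \<bullet> (A *v y) \<le> v \<bullet> (A *v v)"
    using continuous_attains_sup[OF cT neT] by blast
  have vS: "v \<in> S" and nv: "norm v = 1" using vT unfolding T_def by auto
  have "A *v v = (v \<bullet> (A *v v)) *\<^sub>R v"
    by (rule symmetric_matrix_argmax_eigenvector[OF sym S(1) vS nv]) (use inv max in \<open>auto simp: T_def\<close>)
  with vS nv show ?thesis by (rule that)
qed

lemma symmetric_matrix_invariant_subspace_eigenbasis:
  fixes A :: "real^'n^'n"
  assumes sym: "transpose A = A"
  shows "subspace S \<Longrightarrow> dim S = k \<Longrightarrow> (\<forall>x\<in>S. A *v x \<in> S) \<Longrightarrow>
    \<exists>B. B \<subseteq> S \<and> finite B \<and> card B = k \<and> pairwise orthogonal B \<and>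
        (\<forall>b\<in>B. norm b = 1 \<and> A *v b = (b \<bullet> (A *v b)) *\<^sub>R b)"
proof (induction k arbitrary: S)
  case 0
  then show ?case by (intro exI[of _ "{}"]) auto
next
  case (Suc k)
  note S = Suc.prems(1) and dS = Suc.prems(2) and inv = Suc.prems(3)
  have "S \<noteq> {0}" using dS by auto
  then obtain v where vS: "v \<in> S" and nv: "norm v = 1" and ev: "A *v v = (v \<bullet> (A *v v)) *\<^sub>R v"
    using symmetric_matrix_invariant_subspace_eigenvector[OF sym S] inv by blast
  define S' where "S' = {y \<in> S. \<forall>z \<in> span {v}. orthogonal z y}"
  have "span {v} \<subseteq> S" using vS S by (simp add: span_minimal)
  from dim_subspace_orthogonal_to_vectors[OF subspace_span S this]
  have "dim S' + dim (span {v}) = dim S" unfolding S'_def .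
  moreover have "dim (span {v}) = 1" using nv by auto
  ultimately have dS': "dim S' = k" using dS by simp
  have S'_eq: "S' = {y \<in> S. v \<bullet> y = 0}"
    unfolding S'_def by (auto simp: span_singleton orthogonal_def)
  have "S' = S \<inter> {x. v \<bullet> x = 0}" unfolding S'_eq by auto
  then have subS': "subspace S'" using subspace_inter[OF S subspace_hyperplane[of v]] by simp
  have "\<forall>y\<in>S'. A *v y \<in> S'"
  proof
    fix y assume "y \<in> S'"
    then have yS: "y \<in> S" and vy: "v \<bullet> y = 0" unfolding S'_eq by auto
    have "v \<bullet> (A *v y) = (A *v v) \<bullet> y" by (rule inner_symmetric_matrix_vector_mult[OF sym])
    also have "\<dots> = 0" by (subst ev) (simp add: vy)
    finally show "A *v y \<in> S'" unfolding S'_eq using inv yS by auto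
  qed
  then obtain B where B: "B \<subseteq> S'" "finite B" "card B = k" "pairwise orthogonal B"
      "\<forall>b\<in>B. norm b = 1 \<and> A *v b = (b \<bullet> (A *v b)) *\<^sub>R b"
    using Suc.IH[OF subS' dS'] by blast
  have "v \<notin> B" using B(1) nv unfolding S'_eq by auto
  show ?case
  proof (intro exI[of _ "insert v B"] conjI)
    show "insert v B \<subseteq> S" using B(1) vS unfolding S'_eq by auto
    show "finite (insert v B)" using B(2) by simp
    show "card (insert v B) = Suc k" using B(2,3) \<open>v \<notin> B\<close> by simp
    show "pairwise orthogonal (insert v B)"
      using B(1,4) unfolding S'_eq pairwise_insert by (auto simp: orthogonal_def inner_commute)
    show "\<forall>b\<in>insert v B. norm b = 1 \<and> A *v b = (b \<bullet> (A *v b)) *\<^sub>R b"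
      using B(5) nv ev by auto
  qed
qed

lemma symmetric_matrix_orthonormal_eigenbasis:
  fixes A :: "real^'n^'n"
  assumes "transpose A = A"
  obtains B where "finite B" "card B = CARD('n)" "pairwise orthogonal B"
      "\<And>b. b \<in> B \<Longrightarrow> norm b = 1" "\<And>b. b \<in> B \<Longrightarrow> A *v b = (b \<bullet> (A *v b)) *\<^sub>R b"
  using symmetric_matrix_invariant_subspace_eigenbasis[OF assms, of UNIV "CARD('n)"]
  by (auto simp: dim_UNIV)

lemma inner_matrix_vector_mult_gram:
  fixes X :: "real^'n^'m"
  shows "(X *v a) \<bullet> (X *v b) = a \<bullet> ((transpose X ** X) *v b)"
proof -
  have "a \<bullet> ((transpose X ** X) *v b) = a \<bullet> (transpose X *v (X *v b))"
    by (simp add: matrix_vector_mul_assoc)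
  also have "\<dots> = (a v* transpose X) \<bullet> (X *v b)" by (rule dot_lmul_matrix[symmetric])
  also have "a v* transpose X = X *v a"
    by (metis transpose_matrix_vector transpose_transpose)
  finally show ?thesis by simp
qed

lemma orthonormal_set_extends_to_basis:
  fixes C :: "(real^'m) set"
  assumes orthC: "pairwise orthogonal C" and normC: "\<And>x. x \<in> C \<Longrightarrow> norm x = 1"
  obtains D where "C \<subseteq> D" "finite D" "card D = CARD('m)" "pairwise orthogonal D"
    "\<And>x. x \<in> D \<Longrightarrow> norm x = 1"
proof -
  have indC: "independent C"
    using pairwise_orthogonal_independent[OF orthC] normC by fastforce
  then have finC: "finite C" using finiteI_independent by blast
  define W where "W = {y \<in> UNIV. \<forall>x \<in> span C. orthogonal x y}"
  have subW: "subspace W" unfolding W_def using subspace_orthogonal_to_vectors by simp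
  have "dim W + dim (span C) = dim (UNIV :: (real^'m) set)"
    unfolding W_def by (rule dim_subspace_orthogonal_to_vectors) auto
  then have dW: "dim W + card C = CARD('m)"
    using dim_eq_card_independent[OF indC] by (simp add: dim_UNIV)
  obtain C' where C': "C' \<subseteq> W" "pairwise orthogonal C'" "\<And>x. x \<in> C' \<Longrightarrow> norm x = 1"
      "independent C'" "card C' = dim W"
    using orthonormal_basis_subspace[OF subW] by metis
  have finC': "finite C'" using C'(4) finiteI_independent by blast
  have cross: "x \<in> C \<Longrightarrow> y \<in> C' \<Longrightarrow> orthogonal x y" for x y
    using C'(1) span_base unfolding W_def by blast
  have disj: "C \<inter> C' = {}"
  proof (rule ccontr)
    assume "C \<inter> C' \<noteq> {}"
    then obtain x where "x \<in> C" "x \<in> C'" by blast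
    then have "orthogonal x x" using cross by blast
    then show False using normC[OF \<open>x \<in> C\<close>] by (simp add: orthogonal_def)
  qed
  show ?thesis
  proof
    show "C \<subseteq> C \<union> C'" "finite (C \<union> C')" using finC finC' by auto
    show "card (C \<union> C') = CARD('m)" using card_Un_disjoint[OF finC finC' disj] dW C'(5) by simp
    show "pairwise orthogonal (C \<union> C')"
      using orthC C'(2) cross unfolding pairwise_def by (metis Un_iff orthogonal_commute)
    show "x \<in> C \<union> C' \<Longrightarrow> norm x = 1" for x using normC C'(3) by auto
  qed
qed

lemma orthogonal_matrix_of_orthonormal_basis:
  fixes D :: "(real^'m) set"
  assumes "finite D" "card D = CARD('m)" "pairwise orthogonal D" "\<And>x. x \<in> D \<Longrightarrow> norm x = 1"
  obtains U :: "real^'m^'m" where "orthogonal_matrix U" "range (\<lambda>i. column i U) = D"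
proof -
  obtain \<mu> where \<mu>: "bij_betw \<mu> (UNIV::'m set) D"
    using finite_same_card_bij[of "UNIV::'m set" D] assms(1,2) by auto
  define U :: "real^'m^'m" where "U = (\<chi> a b. \<mu> b $ a)"
  have colU: "column i U = \<mu> i" for i unfolding U_def column_def by (simp add: vec_eq_iff)
  show ?thesis
  proof
    have \<mu>_in: "\<mu> i \<in> D" for i using \<mu> by (auto simp: bij_betw_def)
    have \<mu>_orth: "orthogonal (\<mu> i) (\<mu> j)" if "i \<noteq> j" for i j
    proof -
      have "\<mu> i \<noteq> \<mu> j" using \<mu> that by (auto simp: bij_betw_def inj_on_def)
      then show ?thesis using assms(3) \<mu>_in unfolding pairwise_def by blast
    qed
    show "orthogonal_matrix U"
      unfolding orthogonal_matrix_orthonormal_columns colU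
      by (intro conjI allI impI assms(4) \<mu>_in \<mu>_orth)
    show "range (\<lambda>i. column i U) = D" using \<mu> unfolding colU bij_betw_def by blast
  qed
qed

lemma matrix_mult_partial_permutation_entry:
  fixes U :: "real^'k^'m"
  shows "(U ** (\<chi> i j. if j \<in> N \<and> i = \<pi> j then s j else 0)) $ a $ j
    = (if j \<in> N then column (\<pi> j) U $ a * s j else 0)"
  by (cases "j \<in> N") (simp_all add: matrix_matrix_mult_def column_def if_distrib cong: if_cong)

text \<open>If \<open>X\<close> maps the columns of \<open>V\<close> to pairwise orthogonal vectors \<open>w\<^sub>j\<close>, the normalised nonzero
  \<open>w\<^sub>j\<close> extend to the columns of \<open>U\<close>, and \<open>S\<close> places \<open>\<parallel>w\<^sub>j\<parallel>\<close> in column \<open>j\<close> at the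
  row of \<open>U\<close> holding \<open>w\<^sub>j / \<parallel>w\<^sub>j\<parallel>\<close>.\<close>

lemma svd_of_orthogonal_images:
  fixes X :: "real^'n^'m"
  assumes oV: "orthogonal_matrix V"
    and w_orth: "\<And>j j'. j \<noteq> j' \<Longrightarrow> (X *v column j V) \<bullet> (X *v column j' V) = 0"
  obtains U S where "is_svd X U S V"
proof -
  define w where "w j = X *v column j V" for j
  define Np where "Np = {j. w j \<noteq> 0}"
  define c where "c j = (1 / norm (w j)) *\<^sub>R w j" for j
  have c_norm: "j \<in> Np \<Longrightarrow> norm (c j) = 1" for j unfolding c_def Np_def by simp
  have c_orth: "j \<noteq> j' \<Longrightarrow> c j \<bullet> c j' = 0" for j j' unfolding c_def w_def using w_orth by simp
  have c_inj: "j = j'" if "j \<in> Np" "c j = c j'" for j j'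
  proof (rule ccontr)
    assume "j \<noteq> j'"
    then have "c j \<bullet> c j = 0" using c_orth that(2) by metis
    then show False using c_norm[OF that(1)] by simp
  qed
  have "pairwise orthogonal (c ` Np)"
    unfolding pairwise_def orthogonal_def using c_orth by (metis imageE)
  moreover have "x \<in> c ` Np \<Longrightarrow> norm x = 1" for x using c_norm by blast
  ultimately obtain D where "c ` Np \<subseteq> D" "finite D" "card D = CARD('m)" "pairwise orthogonal D"
    "\<And>x. x \<in> D \<Longrightarrow> norm x = 1"
    using orthonormal_set_extends_to_basis by blast
  then obtain U :: "real^'m^'m" where oU: "orthogonal_matrix U" and colU: "c ` Np \<subseteq> range (\<lambda>i. column i U)"
    using orthogonal_matrix_of_orthonormal_basis by metis
  define \<pi> where "\<pi> j = (SOME i. column i U = c j)" for j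
  have col_\<pi>: "column (\<pi> j) U = c j" if "j \<in> Np" for j
  proof -
    have "c j \<in> range (\<lambda>i. column i U)" using colU that by blast
    then have "\<exists>i. column i U = c j" by (metis rangeE)
    then show ?thesis unfolding \<pi>_def by (rule someI_ex)
  qed
  define S :: "real^'n^'m" where "S = (\<chi> i j. if j \<in> Np \<and> i = \<pi> j then norm (w j) else 0)"
  have "(U ** S) $ a $ j = (X ** V) $ a $ j" for a j
  proof -
    have "(X ** V) $ a $ j = w j $ a"
      unfolding w_def by (simp add: matrix_matrix_mult_def matrix_vector_mult_def column_def)
    moreover have "w j $ a = (if j \<in> Np then c j $ a * norm (w j) else 0)"
      unfolding c_def Np_def by simp
    ultimately show ?thesis
      unfolding S_def matrix_mult_partial_permutation_entry using col_\<pi> by simp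
  qed
  then have "X ** V = U ** S" by (simp add: vec_eq_iff)
  then have dec: "X = U ** S ** transpose V"
    using oV by (metis matrix_mul_assoc matrix_mul_rid orthogonal_matrix_def)
  have rows: "j = j'" if "S $ i $ j \<noteq> 0" "S $ i $ j' \<noteq> 0" for i j j'
  proof -
    have "j \<in> Np" "j' \<in> Np" "\<pi> j = \<pi> j'" using that unfolding S_def by (auto split: if_splits)
    then show ?thesis using col_\<pi> c_inj by metis
  qed
  have cols: "i = i'" if "S $ i $ j \<noteq> 0" "S $ i' $ j \<noteq> 0" for i i' j
    using that unfolding S_def by (auto split: if_splits)
  have "S $ i $ j \<ge> 0" for i j unfolding S_def by simp
  then have "is_svd X U S V" unfolding is_svd_def using oU oV rows cols dec by blast
  then show ?thesis by (rule that)
qed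

text \<open>An orthonormal eigenbasis of \<open>X\<^sup>T X\<close> is mapped by \<open>X\<close> to pairwise orthogonal vectors.\<close>

lemma svd_exists:
  fixes X :: "real^'n^'m"
  shows "\<exists>U S V. is_svd X U S V"
proof -
  define A where "A = transpose X ** X"
  have "transpose A = A" unfolding A_def by (simp add: matrix_transpose_mul)
  then obtain Bv where Bv: "finite Bv" "card Bv = CARD('n)" "pairwise orthogonal Bv"
      "\<And>b. b \<in> Bv \<Longrightarrow> norm b = 1" "\<And>b. b \<in> Bv \<Longrightarrow> A *v b = (b \<bullet> (A *v b)) *\<^sub>R b"
    using symmetric_matrix_orthonormal_eigenbasis by blast
  obtain V :: "real^'n^'n" where oV: "orthogonal_matrix V" and colV: "range (\<lambda>j. column j V) = Bv"
    using orthogonal_matrix_of_orthonormal_basis[OF Bv(1-4)] by blast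
  have "(X *v column j V) \<bullet> (X *v column j' V) = 0" if "j \<noteq> j'" for j j'
  proof -
    have "(X *v column j V) \<bullet> (X *v column j' V) = column j V \<bullet> (A *v column j' V)"
      unfolding A_def by (rule inner_matrix_vector_mult_gram)
    also have "\<dots> = 0"
    proof -
      have "column j' V \<in> Bv" using colV by blast
      moreover have "column j V \<bullet> column j' V = 0"
        using oV that unfolding orthogonal_matrix_orthonormal_columns orthogonal_def by blast
      ultimately show ?thesis by (subst Bv(5)) simp_all
    qed
    finally show ?thesis .
  qed
  then show ?thesis using svd_of_orthogonal_images[OF oV] by metis
qed

section \<open>The nuclear norm as a support function\<close>

lemma inner_matrix_eq_sum:
  fixes A B :: "real^'n^'m"
  shows "A \<bullet> B = (\<Sum>i\<in>UNIV. \<Sum>j\<in>UNIV. A$i$j * B$i$j)"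
  by (simp add: inner_vec_def)

lemma inner_matrix_mult_right:
  fixes Q :: "real^'n^'m" and A :: "real^'k^'m" and B :: "real^'n^'k"
  shows "Q \<bullet> (A ** B) = (transpose A ** Q) \<bullet> B"
proof -
  have "Q \<bullet> (A ** B) = (\<Sum>i\<in>UNIV. \<Sum>j\<in>UNIV. \<Sum>k\<in>UNIV. Q$i$j * A$i$k * B$k$j)"
    by (simp add: inner_matrix_eq_sum matrix_matrix_mult_def sum_distrib_left mult_ac)
  also have "\<dots> = (\<Sum>i\<in>UNIV. \<Sum>k\<in>UNIV. \<Sum>j\<in>UNIV. Q$i$j * A$i$k * B$k$j)"
    by (rule sum.cong[OF refl], rule sum.swap)
  also have "\<dots> = (\<Sum>k\<in>UNIV. \<Sum>i\<in>UNIV. \<Sum>j\<in>UNIV. Q$i$j * A$i$k * B$k$j)"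
    by (rule sum.swap)
  also have "\<dots> = (\<Sum>k\<in>UNIV. \<Sum>j\<in>UNIV. \<Sum>i\<in>UNIV. Q$i$j * A$i$k * B$k$j)"
    by (rule sum.cong[OF refl], rule sum.swap)
  also have "\<dots> = (transpose A ** Q) \<bullet> B"
    unfolding inner_matrix_eq_sum matrix_matrix_mult_def transpose_def
    by (simp add: sum_distrib_right sum_distrib_left, simp add: mult_ac)
  finally show ?thesis .
qed

lemma inner_matrix_mult_left:
  fixes Q :: "real^'n^'m" and A :: "real^'k^'m" and B :: "real^'n^'k"
  shows "Q \<bullet> (A ** B) = (Q ** transpose B) \<bullet> A"
proof -
  have "Q \<bullet> (A ** B) = (\<Sum>i\<in>UNIV. \<Sum>j\<in>UNIV. \<Sum>k\<in>UNIV. Q$i$j * A$i$k * B$k$j)"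
    by (simp add: inner_matrix_eq_sum matrix_matrix_mult_def sum_distrib_left mult_ac)
  also have "\<dots> = (\<Sum>i\<in>UNIV. \<Sum>k\<in>UNIV. \<Sum>j\<in>UNIV. Q$i$j * A$i$k * B$k$j)"
    by (rule sum.cong[OF refl], rule sum.swap)
  also have "\<dots> = (Q ** transpose B) \<bullet> A"
    unfolding inner_matrix_eq_sum matrix_matrix_mult_def transpose_def
    by (simp add: sum_distrib_right sum_distrib_left, simp add: mult_ac)
  finally show ?thesis .
qed

lemma inner_svd:
  fixes U :: "real^'m^'m" and V :: "real^'n^'n" and Q S :: "real^'n^'m"
  shows "Q \<bullet> (U ** S ** transpose V) = (transpose U ** (Q ** V)) \<bullet> S"
proof -
  have "Q \<bullet> ((U ** S) ** transpose V) = (Q ** transpose (transpose V)) \<bullet> (U ** S)"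
    by (rule inner_matrix_mult_left)
  also have "\<dots> = (transpose U ** (Q ** V)) \<bullet> S" by (simp add: inner_matrix_mult_right)
  finally show ?thesis .
qed

lemma norm_orthogonal_matrix_vector_mult:
  fixes U :: "real^'m^'m"
  assumes "orthogonal_matrix U"
  shows "norm (U *v x) = norm x"
proof -
  have "(U *v x) \<bullet> (U *v x) = x \<bullet> x"
    using inner_matrix_vector_mult_gram[of U x x] assms by (simp add: orthogonal_matrix_def)
  then show ?thesis by (simp add: norm_eq_sqrt_inner)
qed

definition matrix_contractions :: "(real^'n^'m) set" where
  "matrix_contractions = {Q. \<forall>v. norm (Q *v v) \<le> norm v}"

lemma abs_orthogonal_conj_contraction_le_1:
  fixes U :: "real^'m^'m" and V :: "real^'n^'n" and Q :: "real^'n^'m"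
  assumes "orthogonal_matrix U" "orthogonal_matrix V" "Q \<in> matrix_contractions"
  shows "\<bar>(transpose U ** (Q ** V)) $ i $ j\<bar> \<le> 1"
proof -
  have "(transpose U ** (Q ** V)) $ i $ j = column i U \<bullet> (Q *v column j V)"
    by (simp add: matrix_matrix_mult_def column_def matrix_vector_mult_def inner_vec_def transpose_def)
  moreover have "\<bar>column i U \<bullet> (Q *v column j V)\<bar> \<le> norm (column i U) * norm (Q *v column j V)"
    by (rule Cauchy_Schwarz_ineq2)
  moreover have "norm (Q *v column j V) \<le> norm (column j V)"
    using assms(3) unfolding matrix_contractions_def by blast
  ultimately show ?thesis
    using assms(1,2) unfolding orthogonal_matrix_orthonormal_columns by simp
qed

lemma is_svdD:
  assumes "is_svd X U S V"
  shows "orthogonal_matrix U" "orthogonal_matrix V" "\<And>i j. S$i$j \<ge> 0"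
    "\<And>i j j'. S$i$j \<noteq> 0 \<Longrightarrow> S$i$j' \<noteq> 0 \<Longrightarrow> j = j'"
    "\<And>i i' j. S$i$j \<noteq> 0 \<Longrightarrow> S$i'$j \<noteq> 0 \<Longrightarrow> i = i'"
    "X = U ** S ** transpose V"
  using assms unfolding is_svd_def by auto

lemma inner_contraction_le_singular_value_sum:
  assumes "is_svd X U S V" "Q \<in> matrix_contractions"
  shows "Q \<bullet> X \<le> (\<Sum>i\<in>UNIV. \<Sum>j\<in>UNIV. S$i$j)"
proof -
  note svd = is_svdD[OF assms(1)]
  have "Q \<bullet> X = (\<Sum>i\<in>UNIV. \<Sum>j\<in>UNIV. (transpose U ** (Q ** V))$i$j * S$i$j)"
    unfolding svd(6) inner_svd by (rule inner_matrix_eq_sum)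
  also have "\<dots> \<le> (\<Sum>i\<in>UNIV. \<Sum>j\<in>UNIV. S$i$j)"
  proof (intro sum_mono)
    fix i j
    have "\<bar>(transpose U ** (Q ** V))$i$j\<bar> \<le> 1"
      by (rule abs_orthogonal_conj_contraction_le_1[OF svd(1,2) assms(2)])
    then show "(transpose U ** (Q ** V))$i$j * S$i$j \<le> S$i$j"
      using mult_right_mono[OF abs_le_D1[of "(transpose U ** (Q ** V))$i$j" 1] svd(3)] by simp
  qed
  finally show ?thesis .
qed

lemma norm_partial_permutation_mult_le:
  fixes S :: "real^'n^'m" and y :: "real^'n"
  assumes row: "\<And>i j j'. S$i$j \<noteq> 0 \<Longrightarrow> S$i$j' \<noteq> 0 \<Longrightarrow> j = j'"
    and col: "\<And>i i' j. S$i$j \<noteq> 0 \<Longrightarrow> S$i'$j \<noteq> 0 \<Longrightarrow> i = i'"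
  shows "norm ((\<chi> i j. if S$i$j \<noteq> 0 then 1 else 0) *v y) \<le> norm y"
proof -
  define P :: "real^'n^'m" where "P = (\<chi> i j. if S$i$j \<noteq> 0 then 1 else 0)"
  define D where "D = {i. \<exists>j. S$i$j \<noteq> 0}"
  define \<pi> where "\<pi> i = (SOME j. S$i$j \<noteq> 0)" for i
  have S_\<pi>: "i \<in> D \<Longrightarrow> S$i$(\<pi> i) \<noteq> 0" for i
    unfolding D_def \<pi>_def by (metis (mono_tags) mem_Collect_eq someI)
  have Py: "(P *v y)$i = (if i \<in> D then y$(\<pi> i) else 0)" for i
  proof (cases "i \<in> D")
    case True
    have "(P *v y)$i = (\<Sum>j\<in>UNIV. (if j = \<pi> i then y$j else 0))"
      unfolding P_def matrix_vector_mult_def vec_lambda_beta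
    proof (intro sum.cong refl)
      fix j
      show "(if S $ i $ j \<noteq> 0 then 1 else 0) * y $ j = (if j = \<pi> i then y $ j else 0)"
        using row[of i j "\<pi> i"] S_\<pi>[OF True] by (cases "j = \<pi> i") auto
    qed
    then show ?thesis using True by simp
  next
    case False
    then show ?thesis unfolding P_def matrix_vector_mult_def D_def by auto
  qed
  have inj: "inj_on \<pi> D" unfolding inj_on_def using S_\<pi> col by metis
  have "(P *v y) \<bullet> (P *v y) = (\<Sum>i\<in>D. y$(\<pi> i) * y$(\<pi> i))"
    unfolding inner_vec_def by (simp add: Py if_distrib sum.If_cases cong: if_cong)
  also have "\<dots> = (\<Sum>j\<in>\<pi> ` D. y$j * y$j)" by (simp add: sum.reindex[OF inj])
  also have "\<dots> \<le> (\<Sum>j\<in>UNIV. y$j * y$j)" by (rule sum_mono2) auto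
  also have "\<dots> = y \<bullet> y" by (simp add: inner_vec_def)
  finally show ?thesis unfolding P_def[symmetric] by (simp add: norm_le)
qed

lemma singular_value_sum_attained:
  fixes X :: "real^'n^'m"
  assumes "is_svd X U S V"
  shows "\<exists>Q \<in> matrix_contractions. Q \<bullet> X = (\<Sum>i\<in>UNIV. \<Sum>j\<in>UNIV. S$i$j)"
proof -
  note svd = is_svdD[OF assms(1)]
  define P :: "real^'n^'m" where "P = (\<chi> i j. if S$i$j \<noteq> 0 then 1 else 0)"
  define Q where "Q = U ** P ** transpose V"
  have "transpose U ** (Q ** V) = (transpose U ** U) ** P ** (transpose V ** V)"
    unfolding Q_def by (simp add: matrix_mul_assoc)
  then have "transpose U ** (Q ** V) = P" using svd(1,2) by (simp add: orthogonal_matrix_def)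
  then have "Q \<bullet> X = P \<bullet> S" unfolding svd(6) inner_svd by simp
  also have "\<dots> = (\<Sum>i\<in>UNIV. \<Sum>j\<in>UNIV. S$i$j)"
    unfolding inner_matrix_eq_sum P_def by (auto intro!: sum.cong)
  finally have Q_X: "Q \<bullet> X = (\<Sum>i\<in>UNIV. \<Sum>j\<in>UNIV. S$i$j)" .
  have "norm (Q *v v) \<le> norm v" for v
  proof -
    have "Q *v v = U *v (P *v (transpose V *v v))"
      unfolding Q_def by (simp only: matrix_vector_mul_assoc matrix_mul_assoc)
    then have "norm (Q *v v) = norm (P *v (transpose V *v v))"
      using norm_orthogonal_matrix_vector_mult[OF svd(1)] by simp
    also have "\<dots> \<le> norm (transpose V *v v)"
      unfolding P_def by (rule norm_partial_permutation_mult_le[OF svd(4,5)])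
    also have "\<dots> = norm v"
      using norm_orthogonal_matrix_vector_mult svd(2) orthogonal_matrix_transpose by blast
    finally show ?thesis .
  qed
  then show ?thesis using Q_X unfolding matrix_contractions_def by blast
qed

lemma nuc_norm_svd:
  fixes X :: "real^'n^'m"
  obtains U S V where "is_svd X U S V" "nuc_norm X = (\<Sum>i\<in>UNIV. \<Sum>j\<in>UNIV. S$i$j)"
proof -
  have "\<exists>s. \<exists>U S V. is_svd X U S V \<and> s = (\<Sum>i\<in>UNIV. \<Sum>j\<in>UNIV. S$i$j)"
    using svd_exists[of X] by blast
  then have "\<exists>U S V. is_svd X U S V \<and> nuc_norm X = (\<Sum>i\<in>UNIV. \<Sum>j\<in>UNIV. S$i$j)"
    unfolding nuc_norm_def by (rule someI_ex)
  then show ?thesis using that by blast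
qed

lemma nuc_norm_ge_inner: "Q \<in> matrix_contractions \<Longrightarrow> Q \<bullet> X \<le> nuc_norm X"
proof -
  assume Q: "Q \<in> matrix_contractions"
  obtain U S V where "is_svd X U S V" "nuc_norm X = (\<Sum>i\<in>UNIV. \<Sum>j\<in>UNIV. S$i$j)"
    by (rule nuc_norm_svd)
  then show ?thesis using inner_contraction_le_singular_value_sum[OF _ Q] by simp
qed

lemma nuc_norm_eq_inner: obtains Q where "Q \<in> matrix_contractions" "nuc_norm X = Q \<bullet> X"
proof -
  obtain U S V where "is_svd X U S V" "nuc_norm X = (\<Sum>i\<in>UNIV. \<Sum>j\<in>UNIV. S$i$j)"
    by (rule nuc_norm_svd)
  then show ?thesis using singular_value_sum_attained that by metis
qed

lemma convex_on_nuc_norm: "convex_on UNIV nuc_norm"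
proof (rule convex_onI)
  fix t :: real and x y :: "real^'n^'m"
  assume t: "0 < t" "t < 1"
  obtain Q where Q: "Q \<in> matrix_contractions"
    "nuc_norm ((1 - t) *\<^sub>R x + t *\<^sub>R y) = Q \<bullet> ((1 - t) *\<^sub>R x + t *\<^sub>R y)"
    by (rule nuc_norm_eq_inner)
  have "Q \<bullet> ((1 - t) *\<^sub>R x + t *\<^sub>R y) = (1 - t) * (Q \<bullet> x) + t * (Q \<bullet> y)"
    by (simp add: inner_add_right)
  also have "\<dots> \<le> (1 - t) * nuc_norm x + t * nuc_norm y"
    using t nuc_norm_ge_inner[OF Q(1)] by (intro add_mono mult_left_mono) auto
  finally show "nuc_norm ((1 - t) *\<^sub>R x + t *\<^sub>R y) \<le> (1 - t) * nuc_norm x + t * nuc_norm y"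
    using Q(2) by simp
qed (rule convex_UNIV)

lemma nuc_norm_nonneg: "nuc_norm X \<ge> 0"
  using nuc_norm_ge_inner[of 0 X] unfolding matrix_contractions_def by simp

lemma continuous_on_nuc_norm: "continuous_on UNIV nuc_norm"
  by (rule convex_on_continuous) (auto intro: convex_on_nuc_norm)

section \<open>The entrywise \<open>\<ell>\<^sub>1\<close> norm\<close>

lemma abs_entry_le_norm:
  fixes E :: "real^'n^'m"
  shows "\<bar>E$i$j\<bar> \<le> norm E"
proof -
  have "\<bar>E$i$j\<bar> \<le> norm (E$i)" by (metis component_le_norm_cart real_norm_def)
  also have "\<dots> \<le> norm E" by (rule Finite_Cartesian_Product.norm_nth_le)
  finally show ?thesis .
qed

lemma l1_norm_nonneg: "l1_norm E \<ge> 0"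
  unfolding l1_norm_def by (intro sum_nonneg) auto

lemma l1_norm_le_norm:
  fixes E :: "real^'n^'m"
  shows "l1_norm E \<le> real (CARD('m) * CARD('n)) * norm E"
proof -
  have "l1_norm E \<le> (\<Sum>i\<in>(UNIV::'m set). \<Sum>j\<in>(UNIV::'n set). norm E)"
    unfolding l1_norm_def by (intro sum_mono abs_entry_le_norm)
  then show ?thesis by simp
qed

lemma abs_entry_le_l1_norm:
  fixes E :: "real^'n^'m"
  shows "\<bar>E$i$j\<bar> \<le> l1_norm E"
proof -
  have "\<bar>E$i$j\<bar> \<le> (\<Sum>j\<in>UNIV. \<bar>E$i$j\<bar>)" by (rule member_le_sum) auto
  also have "\<dots> \<le> l1_norm E" unfolding l1_norm_def
    by (rule member_le_sum[of i UNIV "\<lambda>i. \<Sum>j\<in>UNIV. \<bar>E$i$j\<bar>"]) (auto intro: sum_nonneg)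
  finally show ?thesis .
qed

lemma norm_le_l1_norm:
  fixes E :: "real^'n^'m"
  shows "norm E \<le> l1_norm E"
proof -
  have "E \<bullet> E = (\<Sum>i\<in>UNIV. \<Sum>j\<in>UNIV. \<bar>E$i$j\<bar> * \<bar>E$i$j\<bar>)"
    unfolding inner_matrix_eq_sum by (simp add: abs_mult[symmetric])
  also have "\<dots> \<le> (\<Sum>i\<in>UNIV. \<Sum>j\<in>UNIV. \<bar>E$i$j\<bar> * l1_norm E)"
    by (intro sum_mono mult_left_mono abs_entry_le_l1_norm) auto
  also have "\<dots> = l1_norm E * l1_norm E" unfolding l1_norm_def by (simp add: sum_distrib_right)
  finally have "(norm E)^2 \<le> (l1_norm E)^2" by (simp add: dot_square_norm power2_eq_square)
  then show ?thesis using l1_norm_nonneg by (rule power2_le_imp_le)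
qed

lemma l1_norm_triangle: "l1_norm (A + B) \<le> l1_norm A + l1_norm B"
  unfolding l1_norm_def by (simp add: sum.distrib[symmetric] sum_mono abs_triangle_ineq)

lemma l1_norm_scaleR: "l1_norm (c *\<^sub>R A) = \<bar>c\<bar> * l1_norm A"
  unfolding l1_norm_def by (simp add: abs_mult sum_distrib_left)

lemma convex_on_l1_norm: "convex_on UNIV l1_norm"
proof (rule convex_onI)
  fix t :: real and x y :: "real^'n^'m"
  assume "0 < t" "t < 1"
  then show "l1_norm ((1 - t) *\<^sub>R x + t *\<^sub>R y) \<le> (1 - t) * l1_norm x + t * l1_norm y"
    using l1_norm_triangle[of "(1 - t) *\<^sub>R x" "t *\<^sub>R y"] by (simp add: l1_norm_scaleR)
qed (rule convex_UNIV)

lemma continuous_on_l1_norm: "continuous_on UNIV l1_norm"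
  by (rule convex_on_continuous) (auto intro: convex_on_l1_norm)

text \<open>\<open>X / l1_norm X\<close> is a contraction: the operator norm of a matrix is bounded by the sum of
  the absolute values of its entries.\<close>

lemma norm_le_nuc_norm:
  fixes X :: "real^'n^'m"
  shows "norm X \<le> real (CARD('m) * CARD('n)) * nuc_norm X"
proof (cases "X = 0")
  case True
  then show ?thesis using nuc_norm_nonneg[of X] by simp
next
  case False
  define L where "L = l1_norm X"
  have nX: "norm X > 0" using False by simp
  have L_pos: "L > 0" unfolding L_def using norm_le_l1_norm[of X] nX by linarith
  define Q where "Q = (1 / L) *\<^sub>R X"
  have "norm (Q *v v) \<le> norm v" for v
  proof -
    have "norm (X *v v) \<le> onorm ((*v) X) * norm v"
      by (rule onorm[OF matrix_vector_mul_bounded_linear])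
    also have "\<dots> \<le> L * norm v" unfolding L_def l1_norm_def
      by (intro mult_right_mono onorm_le_matrix_component_sum) auto
    finally have "norm (X *v v) \<le> L * norm v" .
    moreover have "Q *v v = (1 / L) *\<^sub>R (X *v v)" unfolding Q_def by (simp add: scaleR_matrix_vector_assoc)
    ultimately show "norm (Q *v v) \<le> norm v" using L_pos by (simp add: field_simps)
  qed
  then have "Q \<in> matrix_contractions" unfolding matrix_contractions_def by blast
  then have "Q \<bullet> X \<le> nuc_norm X" by (rule nuc_norm_ge_inner)
  moreover have "Q \<bullet> X = (norm X)^2 / L" unfolding Q_def by (simp add: power2_norm_eq_inner)
  ultimately have "norm X * norm X \<le> L * nuc_norm X" using L_pos by (simp add: field_simps power2_eq_square)
  also have "\<dots> \<le> (real (CARD('m) * CARD('n)) * norm X) * nuc_norm X"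
    unfolding L_def using l1_norm_le_norm[of X] nuc_norm_nonneg[of X] by (intro mult_right_mono) auto
  finally show ?thesis using nX by (simp add: mult.assoc)
qed

section \<open>Subgradients of proximal points\<close>

definition subgradient :: "('a::real_inner \<Rightarrow> real) \<Rightarrow> 'a \<Rightarrow> 'a \<Rightarrow> bool" where
  "subgradient f x y \<longleftrightarrow> (\<forall>z. f x + y \<bullet> (z - x) \<le> f z)"

lemma subgradient_monotone:
  assumes "subgradient h x a" "subgradient h y b"
  shows "(a - b) \<bullet> (x - y) \<ge> 0"
proof -
  have "h x + a \<bullet> (y - x) \<le> h y" "h y + b \<bullet> (x - y) \<le> h x"
    using assms unfolding subgradient_def by blast+
  moreover have "a \<bullet> (y - x) = - (a \<bullet> (x - y))" by (metis inner_minus_right minus_diff_eq)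
  ultimately show ?thesis by (simp add: inner_diff_left)
qed

lemma subgradient_limit:
  fixes f :: "'a::real_inner \<Rightarrow> real"
  assumes cont: "continuous_on UNIV f" and X: "X \<longlonglongrightarrow> x" and Y: "Y \<longlonglongrightarrow> y"
    and sub: "\<And>k. subgradient f (X k) (Y k)"
  shows "subgradient f x y"
  unfolding subgradient_def
proof
  fix z
  have "(\<lambda>k. f (X k)) \<longlonglongrightarrow> f x"
    using cont X by (simp add: continuous_on_eq_continuous_at isCont_tendsto_compose)
  then have "(\<lambda>k. f (X k) + Y k \<bullet> (z - X k)) \<longlonglongrightarrow> f x + y \<bullet> (z - x)"
    by (intro tendsto_intros X Y)
  then show "f x + y \<bullet> (z - x) \<le> f z"
    by (rule LIMSEQ_le_const2) (use sub in \<open>auto simp: subgradient_def\<close>)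
qed

lemma continuous_attains_global_min:
  fixes \<phi> :: "'a::euclidean_space \<Rightarrow> real"
  assumes cont: "continuous_on UNIV \<phi>" and bdd: "bounded {x. \<phi> x \<le> \<phi> a}"
  obtains x where "\<And>y. \<phi> x \<le> \<phi> y"
proof -
  let ?S = "{x. \<phi> x \<le> \<phi> a}"
  have "closed ?S" by (rule closed_Collect_le[OF cont continuous_on_const])
  then have "compact ?S" using bdd by (simp add: compact_eq_bounded_closed)
  moreover have "?S \<noteq> {}" by auto
  ultimately obtain x where "x \<in> ?S" "\<forall>y\<in>?S. \<phi> x \<le> \<phi> y"
    using continuous_attains_inf[OF _ _ continuous_on_subset[OF cont]] by blast
  then have "\<phi> x \<le> \<phi> y" for y by (cases "y \<in> ?S") auto
  then show ?thesis by (rule that)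
qed

text \<open>Letting the step \<open>t\<close> tend to \<open>0\<close> kills the second-order term \<open>t\<^sup>2 M\<close>.\<close>

lemma convex_minimizer_first_order:
  fixes f q :: "'a::real_vector \<Rightarrow> real"
  assumes convex: "convex_on UNIV f" and min: "\<And>y. f x + q x \<le> f y + q y"
    and q_bound: "\<And>t. 0 < t \<Longrightarrow> t < 1 \<Longrightarrow> q (x + t *\<^sub>R (z - x)) \<le> q x + t * L + t^2 * M"
  shows "f x - L \<le> f z"
proof (rule ccontr)
  assume "\<not> f x - L \<le> f z"
  then have d: "f x - L - f z > 0" by simp
  define t where "t = min (1/2) ((f x - L - f z) / (2 * (\<bar>M\<bar> + 1)))"
  have t: "0 < t" "t < 1" unfolding t_def using d by auto
  have "f (x + t *\<^sub>R (z - x)) \<le> (1 - t) * f x + t * f z"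
    using convex_onD[OF convex, of t x z] t by (simp add: algebra_simps)
  moreover have "f x + q x \<le> f (x + t *\<^sub>R (z - x)) + q (x + t *\<^sub>R (z - x))" by (rule min)
  ultimately have "t * f x \<le> t * f z + t * L + t^2 * M" using q_bound[OF t] by (simp add: algebra_simps)
  then have "t * f x \<le> t * (f z + L + t * M)" by (simp add: algebra_simps power2_eq_square)
  then have le: "f x \<le> f z + L + t * M" using t by simp
  have "t * M \<le> t * \<bar>M\<bar>" using t by (simp add: mult_left_mono)
  also have "t * \<bar>M\<bar> \<le> (f x - L - f z) / (2 * (\<bar>M\<bar> + 1)) * \<bar>M\<bar>"
    unfolding t_def by (rule mult_right_mono) simp_all
  also have "\<dots> < f x - L - f z"
  proof -
    have "\<bar>M\<bar> / (2 * (\<bar>M\<bar> + 1)) < 1" by (simp add: field_simps)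
    then have "(f x - L - f z) * (\<bar>M\<bar> / (2 * (\<bar>M\<bar> + 1))) < (f x - L - f z) * 1"
      using d by (intro mult_strict_left_mono) auto
    then show ?thesis by (simp add: field_simps)
  qed
  finally show False using le by linarith
qed

lemma minimizer_plus_quadratic_first_order:
  fixes f :: "'a::real_vector \<Rightarrow> real" and Q :: "'a \<Rightarrow> 'b::real_inner"
  assumes convex: "convex_on UNIV f" and lin: "linear Q"
    and min: "\<And>y. f x + \<rho> / 2 * (norm (Q (c - x)))\<^sup>2 \<le> f y + \<rho> / 2 * (norm (Q (c - y)))\<^sup>2"
  shows "f x + \<rho> * (Q (c - x) \<bullet> Q (z - x)) \<le> f z"
proof -
  let ?w = "Q (c - x)" and ?d = "Q (z - x)"
  have "f x - - (\<rho> * (?w \<bullet> ?d)) \<le> f z"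
  proof (rule convex_minimizer_first_order[OF convex, where q = "\<lambda>y. \<rho> / 2 * (norm (Q (c - y)))\<^sup>2"
        and M = "\<rho> / 2 * (?d \<bullet> ?d)"])
    show "f x + \<rho> / 2 * (norm (Q (c - x)))\<^sup>2 \<le> f y + \<rho> / 2 * (norm (Q (c - y)))\<^sup>2" for y
      by (rule min)
    fix t :: real
    have "c - (x + t *\<^sub>R (z - x)) = (c - x) - t *\<^sub>R (z - x)" by (simp add: algebra_simps)
    then have Q_step: "Q (c - (x + t *\<^sub>R (z - x))) = ?w - t *\<^sub>R ?d"
      by (simp only: linear_diff[OF lin] linear_scale[OF lin])
    show "\<rho> / 2 * (norm (Q (c - (x + t *\<^sub>R (z - x)))))\<^sup>2
        \<le> \<rho> / 2 * (norm ?w)\<^sup>2 + t * - (\<rho> * (?w \<bullet> ?d)) + t^2 * (\<rho> / 2 * (?d \<bullet> ?d))"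
      unfolding Q_step power2_norm_eq_inner
      by (simp add: inner_diff_left inner_diff_right inner_commute power2_eq_square algebra_simps)
  qed
  then show ?thesis by simp
qed

lemma svt_minimal:
  fixes W :: "real^'n^'m"
  assumes "\<mu> > 0"
  shows "nuc_norm (svt \<mu> W) + (1 / (2*\<mu>)) * (norm (svt \<mu> W - W))\<^sup>2
           \<le> nuc_norm Z + (1 / (2*\<mu>)) * (norm (Z - W))\<^sup>2"
proof -
  define \<phi> where "\<phi> Y = nuc_norm Y + (1 / (2*\<mu>)) * (norm (Y - W))\<^sup>2" for Y :: "real^'n^'m"
  have "bounded {Y. \<phi> Y \<le> \<phi> W}" unfolding bounded_iff
  proof (intro exI ballI)
    fix Y assume "Y \<in> {Y. \<phi> Y \<le> \<phi> W}"
    then have "(1 / (2*\<mu>)) * (norm (Y - W))\<^sup>2 \<le> nuc_norm W"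
      unfolding \<phi>_def using nuc_norm_nonneg[of Y] by simp
    then have "(norm (Y - W))\<^sup>2 \<le> 2 * \<mu> * nuc_norm W" using assms by (simp add: field_simps)
    then have "norm (Y - W) \<le> sqrt (2 * \<mu> * nuc_norm W)" by (simp add: real_le_rsqrt)
    then show "norm Y \<le> norm W + sqrt (2 * \<mu> * nuc_norm W)" using norm_triangle_sub[of Y W] by linarith
  qed
  moreover have "continuous_on UNIV \<phi>" unfolding \<phi>_def
    by (intro continuous_intros continuous_on_nuc_norm)
  ultimately obtain Y0 where Y0: "\<And>Y. \<phi> Y0 \<le> \<phi> Y"
    using continuous_attains_global_min by blast
  txt \<open>Uniqueness, by strict convexity of the quadratic term (parallelogram law).\<close>
  have "Y1 = Y0" if Y1: "\<And>Y. \<phi> Y1 \<le> \<phi> Y" for Y1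
  proof -
    define M where "M = (1/2) *\<^sub>R (Y0 + Y1)"
    let ?d = "(norm (Y0 - Y1))\<^sup>2"
    have "(norm (M - W))\<^sup>2 = (1/2) * (norm (Y0 - W))\<^sup>2 + (1/2) * (norm (Y1 - W))\<^sup>2 - (1/4) * ?d"
      unfolding M_def power2_norm_eq_inner
      by (simp add: inner_diff_left inner_diff_right inner_add_left inner_add_right inner_commute algebra_simps)
    then have "\<phi> M = nuc_norm M
        + (1 / (2*\<mu>)) * ((1/2) * (norm (Y0 - W))\<^sup>2 + (1/2) * (norm (Y1 - W))\<^sup>2 - (1/4) * ?d)"
      unfolding \<phi>_def by simp
    also have "\<dots> \<le> (1/2) * \<phi> Y0 + (1/2) * \<phi> Y1 - (1 / (2*\<mu>)) * ((1/4) * ?d)"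
      using convex_onD[OF convex_on_nuc_norm, of "1/2" Y0 Y1] unfolding \<phi>_def M_def
      by (simp add: scaleR_right_distrib algebra_simps)
    also have "\<phi> Y1 = \<phi> Y0" using Y0 Y1 by (auto intro: antisym)
    finally have "\<phi> M \<le> \<phi> Y0 - (1 / (2*\<mu>)) * ((1/4) * ?d)" by simp
    moreover have "\<phi> Y0 \<le> \<phi> M" by (rule Y0)
    ultimately have "(1 / (2*\<mu>)) * ((1/4) * ?d) \<le> 0" by linarith
    then have "?d \<le> 0" using assms by (simp add: divide_le_0_iff)
    then show ?thesis by simp
  qed
  then have "\<exists>!Y. \<forall>Z. \<phi> Y \<le> \<phi> Z" using Y0 by blast
  then have "\<forall>Z. \<phi> (THE Y. \<forall>Z. \<phi> Y \<le> \<phi> Z) \<le> \<phi> Z" by (rule theI')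
  then show ?thesis unfolding svt_def \<phi>_def by blast
qed

lemma subgradient_svt:
  fixes W :: "real^'n^'m"
  assumes "\<sigma> > 0"
  shows "subgradient nuc_norm (svt (1/\<sigma>) W) (\<sigma> *\<^sub>R (W - svt (1/\<sigma>) W))"
  unfolding subgradient_def
proof
  fix Z
  have "nuc_norm (svt (1/\<sigma>) W) + \<sigma> / 2 * (norm (id (W - svt (1/\<sigma>) W)))\<^sup>2
          \<le> nuc_norm Y + \<sigma> / 2 * (norm (id (W - Y)))\<^sup>2" for Y
    using svt_minimal[of "1/\<sigma>" W Y] assms by (simp add: norm_minus_commute)
  from minimizer_plus_quadratic_first_order[OF convex_on_nuc_norm linear_id this]
  show "nuc_norm (svt (1/\<sigma>) W) + (\<sigma> *\<^sub>R (W - svt (1/\<sigma>) W)) \<bullet> (Z - svt (1/\<sigma>) W) \<le> nuc_norm Z"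
    by simp
qed

lemma soft_threshold_scalar_subgradient:
  fixes lam \<sigma> w z :: real
  assumes lam: "lam > 0" and sig: "\<sigma> > 0"
  defines "e \<equiv> sgn w * max (\<bar>w\<bar> - lam / \<sigma>) 0"
  shows "lam * \<bar>e\<bar> + \<sigma> * (w - e) * (z - e) \<le> lam * \<bar>z\<bar>"
proof -
  have sm: "\<sigma> * (lam / \<sigma>) = lam" using sig by simp
  consider (pos) "w > lam / \<sigma>" | (neg) "w < - (lam / \<sigma>)" | (small) "\<bar>w\<bar> \<le> lam / \<sigma>" by linarith
  then show ?thesis
  proof cases
    case pos
    then have "w > 0" using lam sig by (smt (verit) divide_pos_pos)
    then have e: "e = w - lam / \<sigma>" unfolding e_def using pos by simp
    have "\<sigma> * (w - e) = lam" unfolding e using sm by simp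
    then have "lam * \<bar>e\<bar> + \<sigma> * (w - e) * (z - e) = lam * z" unfolding e using pos by (simp add: algebra_simps)
    then show ?thesis using lam by (simp add: mult_left_mono)
  next
    case neg
    then have "w < 0" using lam sig by (smt (verit) divide_pos_pos)
    then have e: "e = w + lam / \<sigma>" unfolding e_def using neg by simp
    have "\<sigma> * (w - e) = - lam" unfolding e using sm by simp
    then have "lam * \<bar>e\<bar> + \<sigma> * (w - e) * (z - e) = lam * (- z)" unfolding e using neg by (simp add: algebra_simps)
    moreover have "lam * (- z) \<le> lam * \<bar>z\<bar>" using lam by (intro mult_left_mono) auto
    ultimately show ?thesis by simp
  next
    case small
    then have e: "e = 0" unfolding e_def by simp
    have "\<sigma> * w * z \<le> \<sigma> * \<bar>w\<bar> * \<bar>z\<bar>"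
      using sig by (simp add: abs_mult[symmetric] mult.assoc mult_left_mono)
    also have "\<dots> \<le> \<sigma> * (lam / \<sigma>) * \<bar>z\<bar>" using small sig by (intro mult_right_mono mult_left_mono) auto
    finally show ?thesis unfolding e using sm by simp
  qed
qed

lemma subgradient_soft:
  fixes W :: "real^'n^'m"
  assumes lam: "lam > 0" and sig: "\<sigma> > 0"
  shows "subgradient (\<lambda>E. lam * l1_norm E) (soft (lam / \<sigma>) W) (\<sigma> *\<^sub>R (W - soft (lam / \<sigma>) W))"
  unfolding subgradient_def
proof
  fix Z :: "real^'n^'m"
  let ?S = "soft (lam / \<sigma>) W"
  have "lam * l1_norm ?S + (\<sigma> *\<^sub>R (W - ?S)) \<bullet> (Z - ?S)
      = (\<Sum>i\<in>UNIV. \<Sum>j\<in>UNIV. lam * \<bar>?S$i$j\<bar> + \<sigma> * (W$i$j - ?S$i$j) * (Z$i$j - ?S$i$j))"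
    unfolding l1_norm_def inner_matrix_eq_sum by (simp add: sum_distrib_left sum.distrib mult.assoc)
  also have "\<dots> \<le> (\<Sum>i\<in>UNIV. \<Sum>j\<in>UNIV. lam * \<bar>Z$i$j\<bar>)"
    unfolding soft_def vec_lambda_beta by (intro sum_mono soft_threshold_scalar_subgradient lam sig)
  also have "\<dots> = lam * l1_norm Z" unfolding l1_norm_def by (simp add: sum_distrib_left)
  finally show "lam * l1_norm ?S + (\<sigma> *\<^sub>R (W - ?S)) \<bullet> (Z - ?S) \<le> lam * l1_norm Z" .
qed

lemma norm_subgradient_l1_norm_le:
  fixes E Y :: "real^'n^'m"
  assumes lam: "lam > 0" and Y: "subgradient (\<lambda>E. lam * l1_norm E) E Y"
  shows "norm Y \<le> lam * real (CARD('m) * CARD('n))"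
proof -
  let ?C = "real (CARD('m) * CARD('n))"
  have "lam * l1_norm E + Y \<bullet> Y \<le> lam * l1_norm (E + Y)"
    using Y unfolding subgradient_def by (metis add_diff_cancel_left')
  also have "\<dots> \<le> lam * (l1_norm E + ?C * norm Y)"
    using l1_norm_triangle[of E Y] l1_norm_le_norm[of Y] lam by (intro mult_left_mono) auto
  finally have "norm Y * norm Y \<le> (lam * ?C) * norm Y"
    by (simp add: algebra_simps power2_norm_eq_inner[symmetric] power2_eq_square)
  then show ?thesis using lam by (cases "norm Y = 0") (auto simp: mult_le_cancel_right)
qed

section \<open>Existence of a KKT point\<close>

definition kkt_point ::
  "('a::real_inner \<Rightarrow> real) \<Rightarrow> ('a \<Rightarrow> real) \<Rightarrow> ('b \<Rightarrow> 'a) \<Rightarrow> 'a \<Rightarrow> 'a \<Rightarrow> 'b \<Rightarrow> 'a \<Rightarrow> 'a \<Rightarrow> bool"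
  where "kkt_point f g J B X d E Y \<longleftrightarrow>
    subgradient f X Y \<and> subgradient g E Y \<and> (\<forall>v. Y \<bullet> J v = 0) \<and> B + J d = X + E"

lemma kkt_point_minimal:
  assumes J: "linear J" and kkt: "kkt_point f g J B X d E Y" and feasible: "B + J d' = X' + E'"
  shows "f X + g E \<le> f X' + g E'"
proof -
  have "X + E = B + J d" using kkt unfolding kkt_point_def by simp
  then have "(X' - X) + (E' - E) = (B + J d') - (B + J d)" using feasible by (simp add: algebra_simps)
  also have "\<dots> = J d' - J d" by simp
  finally have "(X' - X) + (E' - E) = J (d' - d)" by (simp add: linear_diff[OF J])
  then have "Y \<bullet> (X' - X) + Y \<bullet> (E' - E) = 0"
    using kkt unfolding kkt_point_def by (metis inner_add_right)
  moreover have "f X + Y \<bullet> (X' - X) \<le> f X'" "g E + Y \<bullet> (E' - E) \<le> g E'"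
    using kkt unfolding kkt_point_def subgradient_def by blast+
  ultimately show ?thesis by linarith
qed

text \<open>\<open>G\<close> is a left inverse of \<open>J\<close> for which \<open>P = J \<circ> G\<close> is the orthogonal projection onto
  the range of \<open>J\<close>, as for \<open>G = (J\<^sup>*J)\<^sup>-\<^sup>1 J\<^sup>*\<close>; \<open>Q\<close> is the complementary projection.\<close>

locale range_projection =
  fixes J :: "'b::euclidean_space \<Rightarrow> 'a::euclidean_space" and G :: "'a \<Rightarrow> 'b"
  assumes linear_J: "linear J" and linear_G: "linear G"
    and G_J: "\<And>v. G (J v) = v"
    and inner_JG: "\<And>a b. J (G a) \<bullet> b = J (G a) \<bullet> J (G b)"
begin

definition P :: "'a \<Rightarrow> 'a" where "P a = J (G a)"
definition Q :: "'a \<Rightarrow> 'a" where "Q a = a - P a"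

lemma linear_P: "linear P"
  unfolding P_def[abs_def] using linear_compose[OF linear_G linear_J] by (simp add: o_def)

lemma linear_Q: "linear Q"
  using linear_P unfolding linear_iff Q_def by (simp add: algebra_simps)

lemma P_J: "P (J v) = J v"
  unfolding P_def G_J ..

lemma inner_P: "P a \<bullet> b = P a \<bullet> P b"
  unfolding P_def by (rule inner_JG)

lemma inner_P_right: "a \<bullet> P b = P a \<bullet> P b"
  using inner_P[of b a] by (simp add: inner_commute)

lemma inner_Q_P: "Q a \<bullet> P b = 0"
  unfolding Q_def using inner_P_right[of a b] by (simp add: inner_diff_left)

lemma inner_Q_J: "Q a \<bullet> J v = 0"
  using inner_Q_P[of a "J v"] by (simp add: P_J)

lemma inner_Q_Q: "Q a \<bullet> Q b = Q a \<bullet> b"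
  using inner_Q_P[of a b] unfolding Q_def[of b] by (simp add: inner_diff_right)

definition penalty :: "('a \<Rightarrow> real) \<Rightarrow> ('a \<Rightarrow> real) \<Rightarrow> 'a \<Rightarrow> real \<Rightarrow> 'a \<times> 'a \<Rightarrow> real" where
  "penalty f g B \<rho> z = f (fst z) + g (snd z) + \<rho> / 2 * (norm (Q (B - fst z - snd z)))\<^sup>2"

lemma penalty_at_B: "penalty f g B \<rho> (B, 0) = f B + g 0"
  using linear_Q unfolding penalty_def by (simp add: linear_0)

lemma norm_le_of_penalty_le:
  fixes f g :: "'a \<Rightarrow> real"
  assumes \<rho>: "\<rho> \<ge> 0" and le: "penalty f g B \<rho> z \<le> f B + g 0"
    and coercive: "cf > 0" "\<And>X. cf * norm X \<le> f X" "cg > 0" "\<And>E. cg * norm E \<le> g E"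
  shows "norm (fst z) \<le> (f B + g 0) / cf" "norm (snd z) \<le> (f B + g 0) / cg"
proof -
  have "\<rho> / 2 * (norm (Q (B - fst z - snd z)))\<^sup>2 \<ge> 0" using \<rho> by simp
  then have sum: "cf * norm (fst z) + cg * norm (snd z) \<le> f B + g 0"
    using le coercive(2)[of "fst z"] coercive(4)[of "snd z"] unfolding penalty_def by linarith
  have "cf * norm (fst z) \<ge> 0" "cg * norm (snd z) \<ge> 0" using coercive by simp_all
  then have "cf * norm (fst z) \<le> f B + g 0" "cg * norm (snd z) \<le> f B + g 0" using sum by linarith+
  then show "norm (fst z) \<le> (f B + g 0) / cf" "norm (snd z) \<le> (f B + g 0) / cg"
    using coercive by (simp_all add: pos_le_divide_eq mult.commute)
qed

lemma penalty_minimizer_exists: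
  fixes f g :: "'a \<Rightarrow> real"
  assumes cont: "continuous_on UNIV f" "continuous_on UNIV g" and \<rho>: "\<rho> \<ge> 0"
    and coercive: "cf > 0" "\<And>X. cf * norm X \<le> f X" "cg > 0" "\<And>E. cg * norm E \<le> g E"
  obtains z where "\<And>y. penalty f g B \<rho> z \<le> penalty f g B \<rho> y"
proof (rule continuous_attains_global_min[where a = "(B, 0)"])
  have "continuous_on UNIV Q" using linear_Q by (simp add: linear_continuous_on linear_conv_bounded_linear)
  then have "continuous_on UNIV (\<lambda>z::'a \<times> 'a. Q (B - fst z - snd z))"
    by (rule continuous_on_compose2) (auto intro!: continuous_intros)
  moreover have "continuous_on UNIV (\<lambda>z::'a \<times> 'a. f (fst z))" "continuous_on UNIV (\<lambda>z::'a \<times> 'a. g (snd z))"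
    by (rule continuous_on_compose2[OF cont(1)] continuous_on_compose2[OF cont(2)];
        auto intro!: continuous_intros)+
  ultimately show "continuous_on UNIV (penalty f g B \<rho>)" unfolding penalty_def
    by (intro continuous_intros)
  let ?c = "f B + g 0"
  have "norm z \<le> ?c / cf + ?c / cg" if "penalty f g B \<rho> z \<le> penalty f g B \<rho> (B, 0)" for z
  proof -
    from norm_le_of_penalty_le[OF \<rho> _ coercive, where z = z and B = B] that
    have "norm (fst z) \<le> ?c / cf" "norm (snd z) \<le> ?c / cg" unfolding penalty_at_B by simp_all
    then show ?thesis using norm_Pair_le[of "fst z" "snd z"] by simp
  qed
  then show "bounded {z. penalty f g B \<rho> z \<le> penalty f g B \<rho> (B, 0)}"
    unfolding bounded_iff by blast
qed blast

lemma penalty_minimizer_subgradients: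
  fixes f g :: "'a \<Rightarrow> real"
  assumes convex: "convex_on UNIV f" "convex_on UNIV g"
    and min: "\<And>y. penalty f g B \<rho> (X, E) \<le> penalty f g B \<rho> y"
  shows "subgradient f X (\<rho> *\<^sub>R Q (B - X - E))" "subgradient g E (\<rho> *\<^sub>R Q (B - X - E))"
proof -
  have "f X + \<rho> / 2 * (norm (Q ((B - E) - X)))\<^sup>2 \<le> f y + \<rho> / 2 * (norm (Q ((B - E) - y)))\<^sup>2" for y
    using min[of "(y, E)"] unfolding penalty_def by (simp add: algebra_simps)
  from minimizer_plus_quadratic_first_order[OF convex(1) linear_Q this]
  show "subgradient f X (\<rho> *\<^sub>R Q (B - X - E))"
    unfolding subgradient_def by (simp add: inner_Q_Q algebra_simps)
  have "g E + \<rho> / 2 * (norm (Q ((B - X) - E)))\<^sup>2 \<le> g y + \<rho> / 2 * (norm (Q ((B - X) - y)))\<^sup>2" for y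
    using min[of "(X, y)"] unfolding penalty_def by (simp add: algebra_simps)
  from minimizer_plus_quadratic_first_order[OF convex(2) linear_Q this]
  show "subgradient g E (\<rho> *\<^sub>R Q (B - X - E))"
    unfolding subgradient_def by (simp add: inner_Q_Q algebra_simps)
qed

lemma feasible_if_Q_residual_zero:
  assumes "Q (B - X - E) = 0"
  shows "B + J (G (X + E - B)) = X + E"
proof -
  have "J (G (B - X - E)) = B - X - E" using assms unfolding Q_def P_def by simp
  moreover have "J (G (X + E - B)) = J (G (- (B - X - E)))" by (simp add: algebra_simps)
  then have "J (G (X + E - B)) = - J (G (B - X - E))"
    by (simp only: linear_neg[OF linear_G] linear_neg[OF linear_J])
  ultimately show ?thesis by simp
qed

lemma kkt_point_of_limit:
  assumes cont: "continuous_on UNIV f" "continuous_on UNIV g"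
    and lim: "Xn \<longlonglongrightarrow> X" "En \<longlonglongrightarrow> E" "Yn \<longlonglongrightarrow> Y"
    and sub: "\<And>k. subgradient f (Xn k) (Yn k)" "\<And>k. subgradient g (En k) (Yn k)"
    and orth: "\<And>k v. Yn k \<bullet> J v = 0"
    and infeasibility: "(\<lambda>k. Q (B - Xn k - En k)) \<longlonglongrightarrow> 0"
  shows "kkt_point f g J B X (G (X + E - B)) E Y"
proof -
  have "(\<lambda>k. Q (B - Xn k - En k)) \<longlonglongrightarrow> Q (B - X - E)"
    using linear_Q unfolding linear_conv_bounded_linear
    by (intro bounded_linear.tendsto[of Q] tendsto_intros lim)
  then have "Q (B - X - E) = 0" using infeasibility LIMSEQ_unique by blast
  moreover have "Y \<bullet> J v = 0" for v
  proof -
    have "(\<lambda>k. Yn k \<bullet> J v) \<longlonglongrightarrow> Y \<bullet> J v" by (intro tendsto_intros lim)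
    then show ?thesis using orth by (simp add: LIMSEQ_const_iff)
  qed
  ultimately show ?thesis
    unfolding kkt_point_def using feasible_if_Q_residual_zero
      subgradient_limit[OF cont(1) lim(1,3) sub(1)] subgradient_limit[OF cont(2) lim(2,3) sub(2)]
    by blast
qed

text \<open>Quadratic penalty method: the multipliers \<open>\<rho> Q (B - X - E)\<close> of the penalised problems stay
  bounded because \<open>g\<close> has bounded subgradients, so the infeasibility \<open>Q (B - X - E)\<close> is
  \<open>O(1/\<rho>)\<close>, and a cluster point as \<open>\<rho> \<rightarrow> \<infinity>\<close> is a KKT point.\<close>

lemma kkt_point_exists:
  fixes f g :: "'a \<Rightarrow> real"
  assumes convex: "convex_on UNIV f" "convex_on UNIV g"
    and cont: "continuous_on UNIV f" "continuous_on UNIV g"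
    and coercive: "cf > 0" "\<And>X. cf * norm X \<le> f X" "cg > 0" "\<And>E. cg * norm E \<le> g E"
    and bounded_subgradient: "\<And>E Y. subgradient g E Y \<Longrightarrow> norm Y \<le> Lg"
  obtains X d E Y where "kkt_point f g J B X d E Y"
proof -
  define \<rho> where "\<rho> n = real (Suc n)" for n
  have \<rho>_pos: "\<rho> n > 0" for n unfolding \<rho>_def by simp
  have "\<exists>z. \<forall>y. penalty f g B (\<rho> n) z \<le> penalty f g B (\<rho> n) y" for n
    using penalty_minimizer_exists[OF cont less_imp_le[OF \<rho>_pos] coercive] by metis
  then obtain z where z: "\<And>n y. penalty f g B (\<rho> n) (z n) \<le> penalty f g B (\<rho> n) y"
    by metis
  define c where "c = f B + g 0"
  define Yn where "Yn n = \<rho> n *\<^sub>R Q (B - fst (z n) - snd (z n))" for n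
  have sub: "subgradient f (fst (z n)) (Yn n)" "subgradient g (snd (z n)) (Yn n)" for n
    using penalty_minimizer_subgradients[OF convex, of B "\<rho> n" "fst (z n)" "snd (z n)"] z[of n]
    unfolding Yn_def by simp_all
  have Yn_bound: "norm (Yn n) \<le> Lg" for n by (rule bounded_subgradient[OF sub(2)])
  have "norm (z n, Yn n) \<le> c / cf + c / cg + Lg" for n
  proof -
    have "norm (fst (z n)) \<le> c / cf" "norm (snd (z n)) \<le> c / cg"
      using norm_le_of_penalty_le[OF less_imp_le[OF \<rho>_pos] _ coercive, where B = B and z = "z n"]
        z[of n "(B, 0)"] unfolding penalty_at_B c_def by simp_all
    moreover have "norm (z n, Yn n) \<le> norm (fst (z n)) + norm (snd (z n)) + norm (Yn n)"
      using norm_Pair_le[of "z n" "Yn n"] norm_Pair_le[of "fst (z n)" "snd (z n)"] by simp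
    ultimately show ?thesis using Yn_bound[of n] by linarith
  qed
  then have "bounded (range (\<lambda>n. (z n, Yn n)))" unfolding bounded_iff by blast
  then obtain l \<phi> where \<phi>: "strict_mono \<phi>" and lim: "((\<lambda>n. (z n, Yn n)) \<circ> \<phi>) \<longlonglongrightarrow> l"
    using bounded_imp_convergent_subsequence by blast
  obtain X E Y where l: "l = ((X, E), Y)" by (metis prod.collapse)
  have "(\<lambda>n. Q (B - fst (z n) - snd (z n))) \<longlonglongrightarrow> 0"
  proof (rule Lim_null_comparison)
    have "norm (Q (B - fst (z n) - snd (z n))) = norm (Yn n) * inverse (\<rho> n)" for n
      unfolding Yn_def using \<rho>_pos[of n] by (simp add: field_simps)
    then show "\<forall>\<^sub>F n in sequentially. norm (Q (B - fst (z n) - snd (z n))) \<le> \<bar>Lg\<bar> * inverse (real (Suc n))"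
      using Yn_bound \<rho>_pos unfolding \<rho>_def
      by (simp add: mult_right_mono order_trans[OF _ abs_ge_self])
    show "(\<lambda>n. \<bar>Lg\<bar> * inverse (real (Suc n))) \<longlonglongrightarrow> 0"
      using tendsto_mult_right_zero[OF LIMSEQ_inverse_real_of_nat] by simp
  qed
  from LIMSEQ_subseq_LIMSEQ[OF this \<phi>]
  have infeasibility: "(\<lambda>k. Q (B - fst (z (\<phi> k)) - snd (z (\<phi> k)))) \<longlonglongrightarrow> 0" by (simp add: o_def)
  have lims: "(\<lambda>k. fst (z (\<phi> k))) \<longlonglongrightarrow> X" "(\<lambda>k. snd (z (\<phi> k))) \<longlonglongrightarrow> E" "(\<lambda>k. Yn (\<phi> k)) \<longlonglongrightarrow> Y"
    using tendsto_fst[OF tendsto_fst[OF lim]] tendsto_snd[OF tendsto_fst[OF lim]] tendsto_snd[OF lim]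
    unfolding l o_def by simp_all
  have "subgradient f (fst (z (\<phi> k))) (Yn (\<phi> k))" "subgradient g (snd (z (\<phi> k))) (Yn (\<phi> k))"
    "Yn (\<phi> k) \<bullet> J v = 0" for k v
    using sub unfolding Yn_def by (simp_all add: inner_Q_J)
  from kkt_point_of_limit[OF cont lims this infeasibility] show ?thesis by (rule that)
qed

end

section \<open>Convergence of the sGS-ADMM\<close>

lemma golden_ratio_bound:
  fixes \<xi> :: real
  assumes "0 < \<xi>" "\<xi> < (1 + sqrt 5) / 2"
  shows "\<xi>^2 - \<xi> - 1 < 0"
proof -
  have "\<xi>^2 - \<xi> - 1 = (\<xi> - (1 + sqrt 5) / 2) * (\<xi> - (1 - sqrt 5) / 2)"
    by (simp add: field_simps power2_eq_square)
  moreover have "\<xi> - (1 + sqrt 5) / 2 < 0" using assms by simp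
  moreover have "(1 - sqrt 5) / 2 < 0" by simp
  then have "\<xi> - (1 - sqrt 5) / 2 > 0" using assms by linarith
  ultimately show ?thesis by (simp add: mult_neg_pos)
qed

lemma young_inner:
  fixes x y :: "'a::real_inner"
  assumes t: "t > 0"
  shows "2 * \<bar>x \<bullet> y\<bar> \<le> t * (x \<bullet> x) + (y \<bullet> y) / t"
proof -
  have "0 \<le> (t *\<^sub>R x - y) \<bullet> (t *\<^sub>R x - y)" "0 \<le> (t *\<^sub>R x + y) \<bullet> (t *\<^sub>R x + y)" by simp_all
  then have "2 * t * (x \<bullet> y) \<le> t^2 * (x \<bullet> x) + y \<bullet> y" "- (2 * t * (x \<bullet> y)) \<le> t^2 * (x \<bullet> x) + y \<bullet> y"
    by (simp_all add: inner_diff_left inner_diff_right inner_add_left inner_add_right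
        power2_eq_square inner_commute algebra_simps)
  then have "t * (2 * \<bar>x \<bullet> y\<bar>) \<le> t * (t * (x \<bullet> x) + (y \<bullet> y) / t)"
    using t by (cases "x \<bullet> y \<ge> 0") (auto simp: abs_if algebra_simps power2_eq_square)
  then show ?thesis using t by simp
qed

lemma tendsto_zero_of_inner_self:
  fixes x :: "nat \<Rightarrow> 'a::real_inner"
  assumes "\<And>k. x k \<bullet> x k \<le> b k" "b \<longlonglongrightarrow> 0"
  shows "x \<longlonglongrightarrow> 0"
proof -
  have "(\<lambda>k. x k \<bullet> x k) \<longlonglongrightarrow> 0"
    by (rule tendsto_sandwich[OF _ _ tendsto_const assms(2)]) (use assms(1) in auto)
  then have "(\<lambda>k. sqrt (x k \<bullet> x k)) \<longlonglongrightarrow> 0" using tendsto_real_sqrt by fastforce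
  then show ?thesis by (simp add: norm_eq_sqrt_inner[symmetric] tendsto_norm_zero_iff)
qed

text \<open>The iteration is described through the optimality conditions of its subproblems only; this
  covers the iteration of the theorem, where \<open>G = (J\<^sup>*J)\<^sup>-\<^sup>1 J\<^sup>*\<close> and the two
  \<open>\<Delta>\<tau>\<close>-steps are the exact minimisations over \<open>\<Delta>\<tau>\<close>.\<close>

locale sgs_admm = range_projection J G
  for J :: "'b::euclidean_space \<Rightarrow> 'a::euclidean_space" and G +
  fixes f g :: "'a \<Rightarrow> real" and B :: 'a and \<sigma> \<xi> :: real
    and X E Y :: "nat \<Rightarrow> 'a" and dt dth :: "nat \<Rightarrow> 'b"
  assumes sigma: "\<sigma> > 0" and xi: "0 < \<xi>" "\<xi> < (1 + sqrt 5) / 2"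
    and cont_f: "continuous_on UNIV f" and cont_g: "continuous_on UNIV g"
    and step_X: "\<And>k. subgradient f (X (Suc k)) (Y k + \<sigma> *\<^sub>R (B + J (dt k) - X (Suc k) - E k))"
    and step_E: "\<And>k. subgradient g (E (Suc k)) (Y k + \<sigma> *\<^sub>R (B + J (dth k) - X (Suc k) - E (Suc k)))"
    and step_dt: "\<And>k v. (Y k + \<sigma> *\<^sub>R (B + J (dt (Suc k)) - X (Suc k) - E (Suc k))) \<bullet> J v = 0"
    and step_dth: "\<And>k. J (dth k) - J (dt (Suc k)) = J (G (E k - E (Suc k)))"
    and step_Y: "\<And>k. Y (Suc k) = Y k + (\<xi> * \<sigma>) *\<^sub>R (B + J (dt (Suc k)) - X (Suc k) - E (Suc k))"
begin

text \<open>\<open>r\<close> is the primal residual, \<open>Yh\<close> the multiplier a full step \<open>\<xi> = 1\<close> would give, and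
  \<open>W\<close>, \<open>H\<close> are the terms by which the subproblem optimality conditions deviate from the KKT
  conditions.\<close>

definition r where "r k = B + J (dt k) - X k - E k"
definition Yh where "Yh k = Y k + \<sigma> *\<^sub>R r (Suc k)"
definition W where "W k = J (dt (Suc k) - dt k) - (E (Suc k) - E k)"
definition H where "H k = P (E (Suc k) - E k)"

lemma J_diff: "J (a - b) = J a - J b" using linear_J by (simp add: linear_diff)
lemma P_diff: "P (a - b) = P a - P b" using linear_P by (simp add: linear_diff)

lemma inner_Yh_J: "Yh k \<bullet> J v = 0" unfolding Yh_def r_def using step_dt by simp

lemma Yh_eq: "Yh k = Y (Suc k) + ((1 - \<xi>) * \<sigma>) *\<^sub>R r (Suc k)"
  unfolding Yh_def step_Y r_def by (simp add: algebra_simps)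

lemma subgradient_X: "subgradient f (X (Suc k)) (Yh k - \<sigma> *\<^sub>R W k)"
proof -
  have "Y k + \<sigma> *\<^sub>R (B + J (dt k) - X (Suc k) - E k) = Yh k - \<sigma> *\<^sub>R W k"
    unfolding Yh_def r_def W_def J_diff by (simp add: algebra_simps)
  then show ?thesis using step_X[of k] by simp
qed

lemma subgradient_E: "subgradient g (E (Suc k)) (Yh k - \<sigma> *\<^sub>R H k)"
proof -
  have "Y k + \<sigma> *\<^sub>R (B + J (dth k) - X (Suc k) - E (Suc k)) = Yh k + \<sigma> *\<^sub>R (J (dth k) - J (dt (Suc k)))"
    unfolding Yh_def r_def by (simp add: algebra_simps)
  also have "\<dots> = Yh k - \<sigma> *\<^sub>R H k"
    unfolding step_dth H_def P_def[symmetric] P_diff by (simp add: algebra_simps)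
  finally show ?thesis using step_E[of k] by simp
qed

text \<open>Monotonicity of \<open>\<partial>g\<close> at two consecutive iterates.\<close>

lemma consecutive_E_monotone:
  "\<sigma> * ((H (Suc k) - H k) \<bullet> H (Suc k))
     \<le> - (\<sigma> * (r (Suc (Suc k)) \<bullet> W (Suc k))) - (\<xi> - 1) * \<sigma> * (r (Suc k) \<bullet> W (Suc k))"
proof -
  let ?E1 = "E (Suc k)" and ?E2 = "E (Suc (Suc k))"
  have mono: "((Yh (Suc k) - \<sigma> *\<^sub>R H (Suc k)) - (Yh k - \<sigma> *\<^sub>R H k)) \<bullet> (?E2 - ?E1) \<ge> 0"
    by (rule subgradient_monotone[OF subgradient_E subgradient_E])
  have dY: "Yh (Suc k) - Yh k = \<sigma> *\<^sub>R r (Suc (Suc k)) + ((\<xi> - 1) * \<sigma>) *\<^sub>R r (Suc k)"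
    unfolding Yh_def step_Y r_def by (simp add: algebra_simps)
  have dE: "?E2 - ?E1 = J (dt (Suc (Suc k)) - dt (Suc k)) - W (Suc k)" unfolding W_def by simp
  have "(Yh (Suc k) - Yh k) \<bullet> J (dt (Suc (Suc k)) - dt (Suc k)) = 0"
    using inner_Yh_J by (simp add: inner_diff_left)
  then have "(Yh (Suc k) - Yh k) \<bullet> (?E2 - ?E1) = - ((Yh (Suc k) - Yh k) \<bullet> W (Suc k))"
    unfolding dE by (simp add: inner_diff_right)
  also have "\<dots> = - (\<sigma> * (r (Suc (Suc k)) \<bullet> W (Suc k))) - (\<xi> - 1) * \<sigma> * (r (Suc k) \<bullet> W (Suc k))"
    unfolding dY by (simp add: inner_add_left algebra_simps)
  finally have e1: "(Yh (Suc k) - Yh k) \<bullet> (?E2 - ?E1)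
      = - (\<sigma> * (r (Suc (Suc k)) \<bullet> W (Suc k))) - (\<xi> - 1) * \<sigma> * (r (Suc k) \<bullet> W (Suc k))" .
  have "H (Suc k) - H k = P (?E2 - ?E1 - (?E1 - E k))" unfolding H_def P_diff by simp
  then have e2: "(H (Suc k) - H k) \<bullet> (?E2 - ?E1) = (H (Suc k) - H k) \<bullet> H (Suc k)"
    unfolding H_def by (metis inner_P)
  have "((Yh (Suc k) - \<sigma> *\<^sub>R H (Suc k)) - (Yh k - \<sigma> *\<^sub>R H k)) \<bullet> (?E2 - ?E1)
      = (Yh (Suc k) - Yh k) \<bullet> (?E2 - ?E1) - \<sigma> * ((H (Suc k) - H k) \<bullet> (?E2 - ?E1))"
    by (simp add: inner_diff_left algebra_simps)
  then show ?thesis using mono e1 unfolding e2 by linarith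
qed

definition theta where "theta = (if \<xi> \<le> 1 then 1 else 1 / \<xi>)"
definition c1 where "c1 = \<bar>\<xi> - 1\<bar> * theta"
definition c2 where "c2 = min (2 - \<xi> - c1) (1 - \<bar>\<xi> - 1\<bar> / theta)"

lemma theta_pos: "theta > 0" unfolding theta_def using xi by auto

lemma c1_nonneg: "c1 \<ge> 0" unfolding c1_def using theta_pos by simp

text \<open>The only place where \<open>\<xi> < (1 + \<surd>5)/2\<close> is needed.\<close>

lemma c2_pos: "c2 > 0"
proof (cases "\<xi> \<le> 1")
  case True
  then show ?thesis unfolding c2_def c1_def theta_def using xi by auto
next
  case False
  have "\<xi>^2 - \<xi> - 1 < 0" using golden_ratio_bound xi by blast
  moreover have "2 - \<xi> - (\<xi> - 1) * (1 / \<xi>) = (1 + \<xi> - \<xi>^2) / \<xi>"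
    "1 - (\<xi> - 1) / (1 / \<xi>) = 1 + \<xi> - \<xi>^2"
    using xi by (simp_all add: field_simps power2_eq_square)
  ultimately show ?thesis unfolding c2_def c1_def theta_def using False xi by auto
qed

context
  fixes Xb db Eb Yb
  assumes kkt: "kkt_point f g J B Xb db Eb Yb"
begin

definition m where "m k = J (dt k - db) - (E k - Eb)"
definition p where "p k = P (E k - Eb)"

lemma W_eq: "W k = m (Suc k) - m k"
  unfolding W_def m_def J_diff by (simp add: algebra_simps)

lemma H_eq: "H k = p (Suc k) - p k"
  unfolding H_def p_def P_diff by (simp add: algebra_simps)

lemma X_err: "X k - Xb = m k - r k"
  using kkt unfolding kkt_point_def m_def r_def J_diff by (simp add: algebra_simps)

lemma J_err: "J (dt k - db) = m k + (E k - Eb)"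
  unfolding m_def by simp

lemma kkt_inequality:
  "(Y k - Yb) \<bullet> r (Suc k) + \<sigma> * (r (Suc k) \<bullet> r (Suc k)) + \<sigma> * (W k \<bullet> m (Suc k))
     - \<sigma> * (W k \<bullet> r (Suc k)) + \<sigma> * (H k \<bullet> p (Suc k)) \<le> 0"
proof -
  let ?X1 = "X (Suc k)" and ?E1 = "E (Suc k)"
  have "subgradient f Xb Yb" "subgradient g Eb Yb" using kkt unfolding kkt_point_def by simp_all
  then have mf: "(Yh k - \<sigma> *\<^sub>R W k - Yb) \<bullet> (?X1 - Xb) \<ge> 0"
    and mg: "(Yh k - \<sigma> *\<^sub>R H k - Yb) \<bullet> (?E1 - Eb) \<ge> 0"
    using subgradient_monotone[OF subgradient_X] subgradient_monotone[OF subgradient_E] by blast+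
  have e1: "(Yh k - \<sigma> *\<^sub>R W k - Yb) \<bullet> (?X1 - Xb) =
     (Yh k - Yb) \<bullet> m (Suc k) - (Yh k - Yb) \<bullet> r (Suc k) - \<sigma> * (W k \<bullet> m (Suc k)) + \<sigma> * (W k \<bullet> r (Suc k))"
    unfolding X_err by (simp add: inner_diff_left inner_diff_right algebra_simps)
  have "(Yh k - Yb) \<bullet> J (dt (Suc k) - db) = 0"
    using inner_Yh_J kkt unfolding kkt_point_def by (simp add: inner_diff_left)
  then have "(Yh k - Yb) \<bullet> (?E1 - Eb) = - ((Yh k - Yb) \<bullet> m (Suc k))"
    unfolding m_def by (simp add: inner_diff_right)
  moreover have "H k \<bullet> (?E1 - Eb) = H k \<bullet> p (Suc k)" unfolding H_def p_def by (rule inner_P)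
  ultimately have e2: "(Yh k - \<sigma> *\<^sub>R H k - Yb) \<bullet> (?E1 - Eb) =
     - ((Yh k - Yb) \<bullet> m (Suc k)) - \<sigma> * (H k \<bullet> p (Suc k))"
    by (simp add: inner_diff_left algebra_simps)
  have e3: "(Yh k - Yb) \<bullet> r (Suc k) = (Y k - Yb) \<bullet> r (Suc k) + \<sigma> * (r (Suc k) \<bullet> r (Suc k))"
    unfolding Yh_def by (simp add: inner_diff_left inner_add_left algebra_simps)
  show ?thesis using mf mg e1 e2 e3 by linarith
qed

definition Phi where
  "Phi k = (1 / (\<xi> * \<sigma>)) * ((Y k - Yb) \<bullet> (Y k - Yb)) + \<sigma> * (m k \<bullet> m k) + \<sigma> * (p k \<bullet> p k)"

lemma Phi_decrease:
  "Phi k - Phi (Suc k) \<ge> (2 - \<xi>) * \<sigma> * (r (Suc k) \<bullet> r (Suc k)) + \<sigma> * (W k \<bullet> W k)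
      + \<sigma> * (H k \<bullet> H k) - 2 * \<sigma> * (W k \<bullet> r (Suc k))"
proof -
  let ?a = "Y k - Yb" and ?r = "r (Suc k)" and ?m = "m (Suc k)" and ?p = "p (Suc k)" and ?c = "\<xi> * \<sigma>"
  have m_k: "m k = ?m - W k" and p_k: "p k = ?p - H k" using W_eq H_eq by simp_all
  have "Y (Suc k) - Yb = ?a + ?c *\<^sub>R ?r" unfolding step_Y r_def by (simp add: algebra_simps)
  then have "(Y (Suc k) - Yb) \<bullet> (Y (Suc k) - Yb) = ?a \<bullet> ?a + ?c * (2 * (?a \<bullet> ?r)) + ?c * (?c * (?r \<bullet> ?r))"
    by (simp add: inner_add_left inner_add_right inner_commute algebra_simps)
  moreover have "(1 / ?c) * (?c * (2 * (?a \<bullet> ?r))) = 2 * (?a \<bullet> ?r)"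
    "(1 / ?c) * (?c * (?c * (?r \<bullet> ?r))) = ?c * (?r \<bullet> ?r)" using xi sigma by simp_all
  ultimately have Y_part: "(1 / ?c) * (?a \<bullet> ?a) - (1 / ?c) * ((Y (Suc k) - Yb) \<bullet> (Y (Suc k) - Yb))
      = - 2 * (?a \<bullet> ?r) - ?c * (?r \<bullet> ?r)"
    by (simp only: distrib_left)
  have m_part: "m k \<bullet> m k = ?m \<bullet> ?m - 2 * (W k \<bullet> ?m) + W k \<bullet> W k"
    unfolding m_k by (simp add: inner_diff_left inner_diff_right inner_commute algebra_simps)
  have p_part: "p k \<bullet> p k = ?p \<bullet> ?p - 2 * (H k \<bullet> ?p) + H k \<bullet> H k"
    unfolding p_k by (simp add: inner_diff_left inner_diff_right inner_commute algebra_simps)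
  have "Phi k - Phi (Suc k) = - 2 * (?a \<bullet> ?r) - ?c * (?r \<bullet> ?r) + \<sigma> * (W k \<bullet> W k)
      - 2 * \<sigma> * (W k \<bullet> ?m) + \<sigma> * (H k \<bullet> H k) - 2 * \<sigma> * (H k \<bullet> ?p)"
    using Y_part unfolding Phi_def m_part p_part by (simp add: algebra_simps)
  then show ?thesis using kkt_inequality[of k] by (simp add: algebra_simps)
qed

text \<open>The Lyapunov function; Young's inequality with weight \<open>theta\<close> absorbs the cross term
  \<open>r \<bullet> W\<close> left over in the decrease of \<open>Phi\<close>.\<close>

definition V where
  "V k = Phi (Suc k) + c1 * \<sigma> * (r (Suc k) \<bullet> r (Suc k)) + \<sigma> * (H k \<bullet> H k)"

definition D where
  "D k = c2 * \<sigma> * (r (Suc (Suc k)) \<bullet> r (Suc (Suc k))) + c2 * \<sigma> * (W (Suc k) \<bullet> W (Suc k))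
    + \<sigma> * (H (Suc k) \<bullet> H (Suc k))"

lemma V_decrease: "V k - V (Suc k) \<ge> D k"
proof -
  let ?R1 = "r (Suc k) \<bullet> r (Suc k)" and ?R2 = "r (Suc (Suc k)) \<bullet> r (Suc (Suc k))"
  let ?W1 = "W (Suc k) \<bullet> W (Suc k)" and ?H0 = "H k \<bullet> H k" and ?H1 = "H (Suc k) \<bullet> H (Suc k)"
  let ?Z = "r (Suc k) \<bullet> W (Suc k)" and ?s = "\<xi> - 1"
  let ?WR = "W (Suc k) \<bullet> r (Suc (Suc k))"
  have "2 * \<bar>H k \<bullet> H (Suc k)\<bar> \<le> 1 * ?H0 + ?H1 / 1" by (rule young_inner) simp
  then have young_H: "\<sigma> * (H k \<bullet> H (Suc k)) \<le> \<sigma> * ((?H0 + ?H1) / 2)"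
    using sigma by (intro mult_left_mono) auto
  have "2 * \<bar>?Z\<bar> \<le> theta * ?R1 + ?W1 / theta" by (rule young_inner[OF theta_pos])
  then have young_Z: "\<bar>?s\<bar> * \<sigma> * (2 * \<bar>?Z\<bar>) \<le> \<bar>?s\<bar> * \<sigma> * (theta * ?R1 + ?W1 / theta)"
    using sigma by (intro mult_left_mono) auto
  have "- (?s * ?Z) \<le> \<bar>?s\<bar> * \<bar>?Z\<bar>" by (metis abs_ge_minus_self abs_mult)
  then have "\<sigma> * (- (?s * ?Z)) \<le> \<sigma> * (\<bar>?s\<bar> * \<bar>?Z\<bar>)" using sigma by (intro mult_left_mono) auto
  then have abs_Z: "- (?s * \<sigma> * ?Z) \<le> \<bar>?s\<bar> * \<sigma> * \<bar>?Z\<bar>" by (simp add: algebra_simps)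
  have H_diff: "(H (Suc k) - H k) \<bullet> H (Suc k) = ?H1 - H k \<bullet> H (Suc k)" by (simp add: inner_diff_left)
  have "- 2 * \<sigma> * ?WR \<ge> \<sigma> * ?H1 - \<sigma> * ?H0 - \<bar>?s\<bar> * \<sigma> * (theta * ?R1 + ?W1 / theta)"
    using consecutive_E_monotone[of k] H_diff young_H young_Z abs_Z by (simp add: inner_commute algebra_simps)
  moreover have "\<bar>?s\<bar> * \<sigma> * (theta * ?R1 + ?W1 / theta) = c1 * \<sigma> * ?R1 + (\<bar>?s\<bar> / theta) * \<sigma> * ?W1"
    unfolding c1_def by (simp add: algebra_simps)
  ultimately have "- 2 * \<sigma> * ?WR \<ge> \<sigma> * ?H1 - \<sigma> * ?H0 - c1 * \<sigma> * ?R1 - (\<bar>?s\<bar> / theta) * \<sigma> * ?W1"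
    by linarith
  moreover have "Phi (Suc k) - Phi (Suc (Suc k)) \<ge> (2 - \<xi>) * \<sigma> * ?R2 + \<sigma> * ?W1 + \<sigma> * ?H1 - 2 * \<sigma> * ?WR"
    by (rule Phi_decrease)
  ultimately have "V k - V (Suc k) \<ge> (2 - \<xi> - c1) * \<sigma> * ?R2 + (1 - \<bar>?s\<bar> / theta) * \<sigma> * ?W1 + \<sigma> * ?H1"
    unfolding V_def by (simp add: algebra_simps)
  moreover have "c2 * \<sigma> * ?R2 \<le> (2 - \<xi> - c1) * \<sigma> * ?R2" "c2 * \<sigma> * ?W1 \<le> (1 - \<bar>?s\<bar> / theta) * \<sigma> * ?W1"
    using sigma unfolding c2_def by (intro mult_right_mono; simp)+
  ultimately show ?thesis unfolding D_def by linarith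
qed

lemma D_nonneg: "D k \<ge> 0"
  unfolding D_def using c2_pos sigma by (intro add_nonneg_nonneg mult_nonneg_nonneg) auto

lemma V_nonneg: "V k \<ge> 0"
  unfolding V_def Phi_def using xi sigma c1_nonneg by (intro add_nonneg_nonneg mult_nonneg_nonneg) auto

lemma V_le_V0: "V k \<le> V 0"
proof (induction k)
  case (Suc k)
  then show ?case using V_decrease[of k] D_nonneg[of k] by linarith
qed simp

lemma D_tendsto_zero: "D \<longlonglongrightarrow> 0"
proof -
  have "summable D"
  proof (rule summableI_nonneg_bounded[OF D_nonneg])
    fix n
    have "(\<Sum>k<n. D k) \<le> (\<Sum>k<n. V k - V (Suc k))" by (intro sum_mono V_decrease)
    also have "\<dots> = V 0 - V n" by (rule sum_lessThan_telescope')
    also have "\<dots> \<le> V 0" using V_nonneg[of n] by simp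
    finally show "(\<Sum>k<n. D k) \<le> V 0" .
  qed
  then show ?thesis by (rule summable_LIMSEQ_zero)
qed

lemma V_bounds:
  "(Y (Suc k) - Yb) \<bullet> (Y (Suc k) - Yb) \<le> \<xi> * \<sigma> * V k"
  "m (Suc k) \<bullet> m (Suc k) \<le> V k / \<sigma>" "p (Suc k) \<bullet> p (Suc k) \<le> V k / \<sigma>"
proof -
  have "0 \<le> c1 * \<sigma> * (r (Suc k) \<bullet> r (Suc k)) + \<sigma> * (H k \<bullet> H k)"
    "0 \<le> (1 / (\<xi> * \<sigma>)) * ((Y (Suc k) - Yb) \<bullet> (Y (Suc k) - Yb))"
    "0 \<le> \<sigma> * (m (Suc k) \<bullet> m (Suc k))" "0 \<le> \<sigma> * (p (Suc k) \<bullet> p (Suc k))"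
    using xi sigma c1_nonneg by simp_all
  then have "(1 / (\<xi> * \<sigma>)) * ((Y (Suc k) - Yb) \<bullet> (Y (Suc k) - Yb)) \<le> V k"
    "\<sigma> * (m (Suc k) \<bullet> m (Suc k)) \<le> V k" "\<sigma> * (p (Suc k) \<bullet> p (Suc k)) \<le> V k"
    unfolding V_def Phi_def by linarith+
  then show "(Y (Suc k) - Yb) \<bullet> (Y (Suc k) - Yb) \<le> \<xi> * \<sigma> * V k"
    "m (Suc k) \<bullet> m (Suc k) \<le> V k / \<sigma>" "p (Suc k) \<bullet> p (Suc k) \<le> V k / \<sigma>"
    using xi sigma by (simp_all add: field_simps)
qed

lemma E_err_le: "norm (E k - Eb) \<le> norm (p k) + norm (m k)"
proof -
  let ?e = "E k - Eb" and ?m = "m k"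
  have "P ?m = J (dt k - db) - P ?e" unfolding m_def P_diff P_J ..
  then have e: "?e = p k - (?m - P ?m)" unfolding p_def by (simp add: m_def algebra_simps)
  have "(?m - P ?m) \<bullet> (?m - P ?m) = ?m \<bullet> ?m - P ?m \<bullet> P ?m"
    using inner_P[of ?m ?m] inner_P_right[of ?m ?m] by (simp add: inner_diff_left inner_diff_right inner_commute)
  then have "norm (?m - P ?m) \<le> norm ?m" by (simp add: norm_le)
  then show ?thesis unfolding e using norm_triangle_ineq4[of "p k" "?m - P ?m"] by simp
qed

lemma residuals_tendsto_zero: "r \<longlonglongrightarrow> 0" "W \<longlonglongrightarrow> 0" "H \<longlonglongrightarrow> 0"
proof -
  have cs: "c2 * \<sigma> > 0" using c2_pos sigma by simp
  have D_parts: "c2 * \<sigma> * (r (Suc (Suc k)) \<bullet> r (Suc (Suc k))) \<le> D k"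
    "c2 * \<sigma> * (W (Suc k) \<bullet> W (Suc k)) \<le> D k" "\<sigma> * (H (Suc k) \<bullet> H (Suc k)) \<le> D k" for k
    unfolding D_def using cs sigma by (simp_all add: add_nonneg_nonneg)
  have Dc: "(\<lambda>k. D k / (c2 * \<sigma>)) \<longlonglongrightarrow> 0" "(\<lambda>k. D k / \<sigma>) \<longlonglongrightarrow> 0"
    using tendsto_divide_zero[OF D_tendsto_zero] by simp_all
  have "(\<lambda>k. r (Suc (Suc k))) \<longlonglongrightarrow> 0"
    by (rule tendsto_zero_of_inner_self[OF _ Dc(1)]) (use D_parts(1) cs in \<open>simp add: field_simps\<close>)
  then have "(\<lambda>k. r (Suc k)) \<longlonglongrightarrow> 0" by (rule LIMSEQ_imp_Suc)
  then show "r \<longlonglongrightarrow> 0" by (rule LIMSEQ_imp_Suc)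
  have "(\<lambda>k. W (Suc k)) \<longlonglongrightarrow> 0"
    by (rule tendsto_zero_of_inner_self[OF _ Dc(1)]) (use D_parts(2) cs in \<open>simp add: field_simps\<close>)
  then show "W \<longlonglongrightarrow> 0" by (rule LIMSEQ_imp_Suc)
  have "(\<lambda>k. H (Suc k)) \<longlonglongrightarrow> 0"
    by (rule tendsto_zero_of_inner_self[OF _ Dc(2)]) (use D_parts(3) sigma in \<open>simp add: field_simps\<close>)
  then show "H \<longlonglongrightarrow> 0" by (rule LIMSEQ_imp_Suc)
qed

lemma bounded_range_if_norm_diff_le:
  "(\<And>k. norm (s k - a) \<le> c) \<Longrightarrow> bounded (range s)"
  unfolding bounded_def by (metis dist_norm norm_minus_commute rangeE)

lemma iterates_bounded:
  "bounded (range (\<lambda>k. (X (Suc k), dt (Suc k), E (Suc k), Y (Suc k))))"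
proof -
  have norm_le: "norm x \<le> sqrt c" if "x \<bullet> x \<le> c" for x :: 'a and c
    using that by (simp add: norm_eq_sqrt_inner)
  define b where "b = sqrt (V 0 / \<sigma>)"
  have V_le: "V k / \<sigma> \<le> V 0 / \<sigma>" "\<xi> * \<sigma> * V k \<le> \<xi> * \<sigma> * V 0" for k
    using V_le_V0[of k] sigma xi by (simp_all add: divide_right_mono)
  have m_bound: "norm (m (Suc k)) \<le> b" and p_bound: "norm (p (Suc k)) \<le> b" for k
    unfolding b_def using V_bounds(2,3)[of k] V_le(1)[of k] by (meson norm_le order_trans)+
  have "norm (Y (Suc k) - Yb) \<le> sqrt (\<xi> * \<sigma> * V 0)" for k
    using V_bounds(1)[of k] V_le(2)[of k] by (meson norm_le order_trans)
  then have Y: "bounded (range (\<lambda>k. Y (Suc k)))" by (rule bounded_range_if_norm_diff_le)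
  have E_bound: "norm (E (Suc k) - Eb) \<le> 2 * b" for k
    using E_err_le[of "Suc k"] m_bound[of k] p_bound[of k] by linarith
  then have E: "bounded (range (\<lambda>k. E (Suc k)))" by (rule bounded_range_if_norm_diff_le)
  obtain KG where KG: "\<And>x. norm (G x) \<le> norm x * KG" using linear_G linear_conv_bounded_linear
    bounded_linear.bounded by blast
  have "norm (dt (Suc k) - db) \<le> 3 * b * \<bar>KG\<bar>" for k
  proof -
    have "norm (dt (Suc k) - db) = norm (G (m (Suc k) + (E (Suc k) - Eb)))" by (simp flip: J_err add: G_J)
    also have "\<dots> \<le> norm (m (Suc k) + (E (Suc k) - Eb)) * \<bar>KG\<bar>"
      using KG by (meson abs_ge_self mult_left_mono norm_ge_zero order_trans)
    also have "\<dots> \<le> 3 * b * \<bar>KG\<bar>"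
      using norm_triangle_ineq[of "m (Suc k)" "E (Suc k) - Eb"] m_bound[of k] E_bound[of k]
      by (intro mult_right_mono) auto
    finally show ?thesis .
  qed
  then have dt: "bounded (range (\<lambda>k. dt (Suc k)))" by (rule bounded_range_if_norm_diff_le)
  obtain Kr where Kr: "\<And>k. norm (r k) \<le> Kr"
    using residuals_tendsto_zero(1) by (metis Bseq_def convergentI convergent_imp_Bseq)
  have "norm (X (Suc k) - Xb) \<le> b + Kr" for k
  proof -
    have "norm (X (Suc k) - Xb) \<le> norm (m (Suc k)) + norm (r (Suc k))"
      unfolding X_err by (rule norm_triangle_ineq4)
    then show ?thesis using m_bound[of k] Kr[of "Suc k"] by linarith
  qed
  then have X: "bounded (range (\<lambda>k. X (Suc k)))" by (rule bounded_range_if_norm_diff_le)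
  have "range (\<lambda>k. (X (Suc k), dt (Suc k), E (Suc k), Y (Suc k)))
      \<subseteq> range (\<lambda>k. X (Suc k)) \<times> range (\<lambda>k. dt (Suc k)) \<times> range (\<lambda>k. E (Suc k)) \<times> range (\<lambda>k. Y (Suc k))"
    by auto
  then show ?thesis by (rule bounded_subset[OF bounded_Times[OF X bounded_Times[OF dt bounded_Times[OF E Y]]]])
qed

lemma V_subseq_tendsto_zero:
  assumes "strict_mono \<phi>" and lim: "(\<lambda>k. dt (Suc (\<phi> k))) \<longlonglongrightarrow> db" "(\<lambda>k. E (Suc (\<phi> k))) \<longlonglongrightarrow> Eb"
    "(\<lambda>k. Y (Suc (\<phi> k))) \<longlonglongrightarrow> Yb"
  shows "(V \<circ> \<phi>) \<longlonglongrightarrow> 0"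
proof -
  have r: "(\<lambda>k. r (Suc (\<phi> k))) \<longlonglongrightarrow> 0"
    using LIMSEQ_subseq_LIMSEQ[OF LIMSEQ_Suc[OF residuals_tendsto_zero(1)] assms(1)] by (simp add: o_def)
  have H: "(\<lambda>k. H (\<phi> k)) \<longlonglongrightarrow> 0"
    using LIMSEQ_subseq_LIMSEQ[OF residuals_tendsto_zero(3) assms(1)] by (simp add: o_def)
  have JP: "bounded_linear J" "bounded_linear P" using linear_J linear_P by (simp_all add: linear_conv_bounded_linear)
  have "(\<lambda>k. m (Suc (\<phi> k))) \<longlonglongrightarrow> J (db - db) - (Eb - Eb)"
    unfolding m_def by (intro tendsto_intros bounded_linear.tendsto[OF JP(1)] lim)
  then have m: "(\<lambda>k. m (Suc (\<phi> k))) \<longlonglongrightarrow> 0" using linear_J by (simp add: linear_0)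
  have "(\<lambda>k. p (Suc (\<phi> k))) \<longlonglongrightarrow> P (Eb - Eb)"
    unfolding p_def by (intro tendsto_intros bounded_linear.tendsto[OF JP(2)] lim)
  then have p: "(\<lambda>k. p (Suc (\<phi> k))) \<longlonglongrightarrow> 0" using linear_P by (simp add: linear_0)
  have Y: "(\<lambda>k. Y (Suc (\<phi> k)) - Yb) \<longlonglongrightarrow> 0" using lim(3) by (simp add: LIM_zero)
  have "(\<lambda>k. (Y (Suc (\<phi> k)) - Yb) \<bullet> (Y (Suc (\<phi> k)) - Yb)) \<longlonglongrightarrow> 0"
    "(\<lambda>k. m (Suc (\<phi> k)) \<bullet> m (Suc (\<phi> k))) \<longlonglongrightarrow> 0" "(\<lambda>k. p (Suc (\<phi> k)) \<bullet> p (Suc (\<phi> k))) \<longlonglongrightarrow> 0"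
    "(\<lambda>k. r (Suc (\<phi> k)) \<bullet> r (Suc (\<phi> k))) \<longlonglongrightarrow> 0" "(\<lambda>k. H (\<phi> k) \<bullet> H (\<phi> k)) \<longlonglongrightarrow> 0"
    using tendsto_inner[OF Y Y] tendsto_inner[OF m m] tendsto_inner[OF p p] tendsto_inner[OF r r]
      tendsto_inner[OF H H] by simp_all
  note terms = tendsto_mult_right_zero[OF this(1), of "1 / (\<xi> * \<sigma>)"]
    tendsto_mult_right_zero[OF this(2), of \<sigma>] tendsto_mult_right_zero[OF this(3), of \<sigma>]
    tendsto_mult_right_zero[OF this(4), of "c1 * \<sigma>"] tendsto_mult_right_zero[OF this(5), of \<sigma>]
  have "(\<lambda>k. V (\<phi> k)) \<longlonglongrightarrow> 0"
    unfolding V_def Phi_def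
    using tendsto_add_zero[OF tendsto_add_zero[OF tendsto_add_zero[OF tendsto_add_zero[OF terms(1,2)] terms(3)]
          terms(4)] terms(5)] by simp
  then show ?thesis by (simp add: o_def)
qed

lemma tendsto_kkt_point_if_V_subseq:
  assumes "strict_mono \<phi>" "(V \<circ> \<phi>) \<longlonglongrightarrow> 0"
  shows "X \<longlonglongrightarrow> Xb" "dt \<longlonglongrightarrow> db" "E \<longlonglongrightarrow> Eb" "Y \<longlonglongrightarrow> Yb"
proof -
  have "decseq V" unfolding decseq_Suc_iff using V_decrease D_nonneg by (meson diff_ge_0_iff_ge order_trans)
  moreover have "\<forall>k. 0 \<le> V k" using V_nonneg by simp
  ultimately obtain L where L: "V \<longlonglongrightarrow> L" by (rule decseq_convergent)
  then have V: "V \<longlonglongrightarrow> 0"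
    using LIMSEQ_subseq_LIMSEQ[OF L assms(1)] assms(2) LIMSEQ_unique by metis
  have Vs: "(\<lambda>k. \<xi> * \<sigma> * V k) \<longlonglongrightarrow> 0" "(\<lambda>k. V k / \<sigma>) \<longlonglongrightarrow> 0"
    using tendsto_mult_right_zero[OF V, of "\<xi> * \<sigma>"] tendsto_divide_zero[OF V] by simp_all
  have "(\<lambda>k. Y (Suc k) - Yb) \<longlonglongrightarrow> 0" by (rule tendsto_zero_of_inner_self[OF V_bounds(1) Vs(1)])
  then have "(\<lambda>k. Y (Suc k)) \<longlonglongrightarrow> Yb" by (simp add: LIM_zero_iff)
  then show "Y \<longlonglongrightarrow> Yb" by (rule LIMSEQ_imp_Suc)
  have m: "(\<lambda>k. m (Suc k)) \<longlonglongrightarrow> 0" by (rule tendsto_zero_of_inner_self[OF V_bounds(2) Vs(2)])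
  have p: "(\<lambda>k. p (Suc k)) \<longlonglongrightarrow> 0" by (rule tendsto_zero_of_inner_self[OF V_bounds(3) Vs(2)])
  have r: "(\<lambda>k. r (Suc k)) \<longlonglongrightarrow> 0" using LIMSEQ_Suc[OF residuals_tendsto_zero(1)] .
  have "(\<lambda>k. X (Suc k) - Xb) \<longlonglongrightarrow> 0 - 0"
    unfolding X_err by (intro tendsto_intros m r)
  then have "(\<lambda>k. X (Suc k)) \<longlonglongrightarrow> Xb" by (simp add: LIM_zero_iff)
  then show "X \<longlonglongrightarrow> Xb" by (rule LIMSEQ_imp_Suc)
  have E: "(\<lambda>k. E (Suc k) - Eb) \<longlonglongrightarrow> 0"
  proof (rule Lim_null_comparison)
    show "\<forall>\<^sub>F k in sequentially. norm (E (Suc k) - Eb) \<le> norm (p (Suc k)) + norm (m (Suc k))"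
      using E_err_le by simp
    show "(\<lambda>k. norm (p (Suc k)) + norm (m (Suc k))) \<longlonglongrightarrow> 0"
      using tendsto_add_zero[OF tendsto_norm_zero[OF p] tendsto_norm_zero[OF m]] .
  qed
  then have "(\<lambda>k. E (Suc k)) \<longlonglongrightarrow> Eb" by (simp add: LIM_zero_iff)
  then show "E \<longlonglongrightarrow> Eb" by (rule LIMSEQ_imp_Suc)
  have "bounded_linear G" using linear_G by (simp add: linear_conv_bounded_linear)
  from bounded_linear.tendsto[OF this tendsto_add[OF m E]]
  have "(\<lambda>k. dt (Suc k) - db) \<longlonglongrightarrow> G (0 + 0)" by (simp flip: J_err add: G_J)
  then have "(\<lambda>k. dt (Suc k)) \<longlonglongrightarrow> db" using linear_G by (simp add: LIM_zero_iff linear_0)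
  then show "dt \<longlonglongrightarrow> db" by (rule LIMSEQ_imp_Suc)
qed

end

end

context sgs_admm
begin

lemma subseq_limit_kkt_point:
  assumes res: "r \<longlonglongrightarrow> 0" "W \<longlonglongrightarrow> 0" "H \<longlonglongrightarrow> 0" and \<phi>: "strict_mono \<phi>"
    and lim: "(\<lambda>k. X (Suc (\<phi> k))) \<longlonglongrightarrow> Xl" "(\<lambda>k. dt (Suc (\<phi> k))) \<longlonglongrightarrow> dl"
      "(\<lambda>k. E (Suc (\<phi> k))) \<longlonglongrightarrow> El" "(\<lambda>k. Y (Suc (\<phi> k))) \<longlonglongrightarrow> Yl"
  shows "kkt_point f g J B Xl dl El Yl"
proof -
  have sub: "(\<lambda>k. s (\<phi> k)) \<longlonglongrightarrow> 0" if "s \<longlonglongrightarrow> 0" for s :: "nat \<Rightarrow> 'a"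
    using LIMSEQ_subseq_LIMSEQ[OF that \<phi>] by (simp add: o_def)
  have r: "(\<lambda>k. r (Suc (\<phi> k))) \<longlonglongrightarrow> 0" using sub[OF LIMSEQ_Suc[OF res(1)]] .
  have "(\<lambda>k. Y (Suc (\<phi> k)) + ((1 - \<xi>) * \<sigma>) *\<^sub>R r (Suc (\<phi> k))) \<longlonglongrightarrow> Yl + ((1 - \<xi>) * \<sigma>) *\<^sub>R 0"
    by (intro tendsto_intros lim r)
  then have Yh: "(\<lambda>k. Yh (\<phi> k)) \<longlonglongrightarrow> Yl" by (simp add: Yh_eq)
  have "(\<lambda>k. Yh (\<phi> k) - \<sigma> *\<^sub>R W (\<phi> k)) \<longlonglongrightarrow> Yl - \<sigma> *\<^sub>R 0"
    "(\<lambda>k. Yh (\<phi> k) - \<sigma> *\<^sub>R H (\<phi> k)) \<longlonglongrightarrow> Yl - \<sigma> *\<^sub>R 0"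
    by (intro tendsto_intros Yh sub res)+
  then have "subgradient f Xl Yl" "subgradient g El Yl"
    using subgradient_limit[OF cont_f lim(1) _ subgradient_X] subgradient_limit[OF cont_g lim(3) _ subgradient_E]
    by simp_all
  moreover have "Yl \<bullet> J v = 0" for v
  proof -
    have "(\<lambda>k. Yh (\<phi> k) \<bullet> J v) \<longlonglongrightarrow> Yl \<bullet> J v" by (intro tendsto_intros Yh)
    moreover have "(\<lambda>k. Yh (\<phi> k) \<bullet> J v) = (\<lambda>k. 0)" using inner_Yh_J by simp
    ultimately show ?thesis using LIMSEQ_unique tendsto_const by metis
  qed
  moreover have "B + J dl = Xl + El"
  proof -
    have "bounded_linear J" using linear_J by (simp add: linear_conv_bounded_linear)
    from bounded_linear.tendsto[OF this lim(2)]
    have "(\<lambda>k. r (Suc (\<phi> k))) \<longlonglongrightarrow> B + J dl - Xl - El"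
      unfolding r_def by (intro tendsto_intros lim)
    then have "B + J dl - Xl - El = 0" using r LIMSEQ_unique by blast
    then show ?thesis by (simp add: algebra_simps)
  qed
  ultimately show ?thesis unfolding kkt_point_def by blast
qed

text \<open>Given one KKT point, the iterates are bounded; a cluster point is again a KKT point, and
  the Lyapunov function built on that cluster point tends to \<open>0\<close>.\<close>

theorem converges_to_kkt_point:
  assumes kkt: "kkt_point f g J B Xb db Eb Yb"
  obtains Xl dl El Yl where "X \<longlonglongrightarrow> Xl" "dt \<longlonglongrightarrow> dl" "E \<longlonglongrightarrow> El" "Y \<longlonglongrightarrow> Yl"
    "kkt_point f g J B Xl dl El Yl"
proof -
  obtain l \<phi> where \<phi>: "strict_mono \<phi>"
    and lim: "((\<lambda>k. (X (Suc k), dt (Suc k), E (Suc k), Y (Suc k))) \<circ> \<phi>) \<longlonglongrightarrow> l"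
    using bounded_imp_convergent_subsequence[OF iterates_bounded[OF kkt]] by blast
  obtain Xl dl El Yl where l: "l = (Xl, dl, El, Yl)" by (metis prod.collapse)
  have X: "(\<lambda>k. X (Suc (\<phi> k))) \<longlonglongrightarrow> Xl" and dt: "(\<lambda>k. dt (Suc (\<phi> k))) \<longlonglongrightarrow> dl"
    and E: "(\<lambda>k. E (Suc (\<phi> k))) \<longlonglongrightarrow> El" and Y: "(\<lambda>k. Y (Suc (\<phi> k))) \<longlonglongrightarrow> Yl"
    using tendsto_fst[OF lim] tendsto_fst[OF tendsto_snd[OF lim]]
      tendsto_fst[OF tendsto_snd[OF tendsto_snd[OF lim]]] tendsto_snd[OF tendsto_snd[OF tendsto_snd[OF lim]]]
    unfolding l o_def by simp_all
  have kkt_l: "kkt_point f g J B Xl dl El Yl"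
    using subseq_limit_kkt_point[OF residuals_tendsto_zero[OF kkt] \<phi> X dt E Y] .
  have "(V dl El Yl \<circ> \<phi>) \<longlonglongrightarrow> 0" by (rule V_subseq_tendsto_zero[OF kkt_l \<phi> dt E Y])
  from tendsto_kkt_point_if_V_subseq[OF kkt_l \<phi> this] kkt_l show ?thesis by (rule that)
qed

end

section \<open>The sGS-ADMM for problem (P)\<close>

lemma pseudo_inverse_range_projection:
  fixes J :: "'b::euclidean_space \<Rightarrow> 'a::euclidean_space"
  assumes lin: "linear J" and bij: "bij (adjoint J \<circ> J)"
  shows "range_projection J (\<lambda>a. inv (adjoint J \<circ> J) (adjoint J a))"
proof -
  let ?A = "adjoint J" and ?N = "inv (adjoint J \<circ> J)"
  have adj: "J x \<bullet> y = x \<bullet> ?A y" for x y using adjoint_clauses(1)[OF lin] by simp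
  have linA: "linear ?A" by (rule adjoint_linear[OF lin])
  have linN: "linear ?N"
    by (rule inj_linear_imp_inv_linear[OF linear_compose[OF lin linA] bij_is_inj[OF bij]])
  have N_left: "?N (?A (J v)) = v" for v using inv_f_f[OF bij_is_inj[OF bij], of v] by simp
  have N_right: "?A (J (?N w)) = w" for w using surj_f_inv_f[OF bij_is_surj[OF bij], of w] by simp
  have linG: "linear (\<lambda>a. ?N (?A a))" using linear_compose[OF linA linN] by (simp add: o_def)
  have "J (?N (?A a)) \<bullet> b = J (?N (?A a)) \<bullet> J (?N (?A b))" for a b
  proof -
    have "J (?N (?A a)) \<bullet> b = ?N (?A a) \<bullet> ?A b" by (rule adj)
    also have "\<dots> = ?N (?A a) \<bullet> ?A (J (?N (?A b)))" by (simp only: N_right)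
    also have "\<dots> = J (?N (?A a)) \<bullet> J (?N (?A b))" by (rule adj[symmetric])
    finally show ?thesis .
  qed
  then show ?thesis by (rule range_projection.intro[OF lin linG N_left])
qed

text \<open>The two \<open>\<Delta>\<tau>\<close>-steps solve the normal equations of the augmented Lagrangian in \<open>\<Delta>\<tau>\<close>.\<close>

lemma normal_equation_orthogonal:
  fixes J :: "'b::euclidean_space \<Rightarrow> 'a::euclidean_space"
  assumes lin: "linear J" and bij: "bij (adjoint J \<circ> J)" and \<sigma>: "\<sigma> \<noteq> 0"
    and d: "d = - inv (adjoint J \<circ> J) (adjoint J w + (1/\<sigma>) *\<^sub>R adjoint J y)"
  shows "(y + \<sigma> *\<^sub>R (w + J d)) \<bullet> J v = 0"
proof -
  let ?A = "adjoint J"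
  have linA: "linear ?A" by (rule adjoint_linear[OF lin])
  have "?A (J d) = - (?A w + (1/\<sigma>) *\<^sub>R ?A y)"
    using surj_f_inv_f[OF bij_is_surj[OF bij]] linear_neg[OF linA] linear_neg[OF lin] unfolding d by simp
  then have AJd: "?A (J d) = - ?A w - (1/\<sigma>) *\<^sub>R ?A y" by simp
  have "?A (y + \<sigma> *\<^sub>R (w + J d)) = ?A y + \<sigma> *\<^sub>R ?A w + \<sigma> *\<^sub>R ?A (J d)"
    by (simp add: linear_add[OF linA] linear_scale[OF linA] scaleR_add_right)
  also have "\<dots> = 0" unfolding AJd using \<sigma> by (simp add: algebra_simps)
  finally have "?A (y + \<sigma> *\<^sub>R (w + J d)) = 0" .
  moreover have "v \<bullet> ?A (y + \<sigma> *\<^sub>R (w + J d)) = J v \<bullet> (y + \<sigma> *\<^sub>R (w + J d))"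
    by (rule adjoint_clauses(1)[OF lin])
  ultimately show ?thesis by (simp add: inner_commute)
qed

lemma normal_equation_difference:
  fixes J :: "'b::euclidean_space \<Rightarrow> 'a::euclidean_space"
  assumes lin: "linear J" and bij: "bij (adjoint J \<circ> J)"
    and d1: "d1 = - inv (adjoint J \<circ> J) (adjoint J w1 + c)"
    and d2: "d2 = - inv (adjoint J \<circ> J) (adjoint J w2 + c)"
  shows "d1 - d2 = inv (adjoint J \<circ> J) (adjoint J (w2 - w1))"
proof -
  have linN: "linear (inv (adjoint J \<circ> J))"
    by (rule inj_linear_imp_inv_linear[OF linear_compose[OF lin adjoint_linear[OF lin]] bij_is_inj[OF bij]])
  show ?thesis unfolding d1 d2
    by (simp add: linear_diff[OF linN, symmetric] linear_diff[OF adjoint_linear[OF lin]])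
qed

lemma subgradient_svt_step:
  assumes "\<sigma> > 0" "X1 = svt (1/\<sigma>) (B + Jd - E + (1/\<sigma>) *\<^sub>R Y)"
  shows "subgradient nuc_norm X1 (Y + \<sigma> *\<^sub>R (B + Jd - X1 - E))"
proof -
  have "\<sigma> *\<^sub>R (B + Jd - E + (1/\<sigma>) *\<^sub>R Y - X1) = Y + \<sigma> *\<^sub>R (B + Jd - X1 - E)"
    using assms(1) by (simp add: algebra_simps)
  then show ?thesis using subgradient_svt[OF assms(1)] unfolding assms(2) by metis
qed

lemma subgradient_soft_step:
  assumes "lam > 0" "\<sigma> > 0" "E1 = soft (lam / \<sigma>) (B + Jd - X1 + (1/\<sigma>) *\<^sub>R Y)"
  shows "subgradient (\<lambda>E. lam * l1_norm E) E1 (Y + \<sigma> *\<^sub>R (B + Jd - X1 - E1))"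
proof -
  have "\<sigma> *\<^sub>R (B + Jd - X1 + (1/\<sigma>) *\<^sub>R Y - E1) = Y + \<sigma> *\<^sub>R (B + Jd - X1 - E1)"
    using assms(2) by (simp add: algebra_simps)
  then show ?thesis using subgradient_soft[OF assms(1,2)] unfolding assms(3) by metis
qed

lemma nuc_l1_kkt_point_exists:
  fixes J :: "'b::euclidean_space \<Rightarrow> real^'n^'m"
  assumes "range_projection J G" "lam > 0"
  obtains X d E Y where "kkt_point nuc_norm (\<lambda>E. lam * l1_norm E) J B X d E Y"
proof -
  interpret range_projection J G by (rule assms(1))
  show ?thesis
  proof (rule kkt_point_exists)
    let ?C = "real (CARD('m) * CARD('n))"
    show "convex_on UNIV nuc_norm" "continuous_on UNIV nuc_norm"
      by (rule convex_on_nuc_norm continuous_on_nuc_norm)+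
    show "convex_on UNIV (\<lambda>E. lam * l1_norm E)"
      using assms(2) by (intro convex_on_cmul convex_on_l1_norm) simp
    show "continuous_on UNIV (\<lambda>E. lam * l1_norm E)"
      by (rule continuous_on_mult_left[OF continuous_on_l1_norm])
    show "0 < 1 / ?C" "1 / ?C * norm X \<le> nuc_norm X" for X :: "real^'n^'m"
      using norm_le_nuc_norm[of X] by (simp_all add: field_simps)
    show "0 < lam" "lam * norm E \<le> lam * l1_norm E" for E :: "real^'n^'m"
      using assms(2) norm_le_l1_norm[of E] by simp_all
    show "norm Y \<le> lam * ?C" if "subgradient (\<lambda>E. lam * l1_norm E) E Y" for E Y :: "real^'n^'m"
      by (rule norm_subgradient_l1_norm_le[OF assms(2) that])
  qed (rule that)
qed

lemma kkt_point_optimal_P: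
  assumes "linear J" "kkt_point nuc_norm (\<lambda>E. lam * l1_norm E) J B X d E Y"
  shows "optimal_P B J lam X d E"
proof -
  have "B + J d = X + E" using assms(2) unfolding kkt_point_def by blast
  moreover have "nuc_norm X + lam * l1_norm E \<le> nuc_norm X' + lam * l1_norm E'"
    if "B + J d' = X' + E'" for X' d' E'
    using kkt_point_minimal[OF assms that] .
  ultimately show ?thesis unfolding optimal_P_def by blast
qed

lemma nuc_l1_iteration_sgs_admm:
  fixes B :: "real^'n^'m" and J :: "real^'p \<Rightarrow> real^'n^'m"
    and lam \<sigma> \<xi> :: real
    and X E Y :: "nat \<Rightarrow> real^'n^'m" and dt dth :: "nat \<Rightarrow> real^'p"
  assumes lin: "linear J"
    and inv: "bij (adjoint J \<circ> J)"
    and lam: "lam > 0" and sig: "\<sigma> > 0"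
    and xi: "0 < \<xi>" "\<xi> < (1 + sqrt 5) / 2"
    and stepX: "\<And>k. X (Suc k) = svt (1/\<sigma>) (B + J (dt k) - E k + (1/\<sigma>) *\<^sub>R Y k)"
    and stepT1: "\<And>k. dth k = - inv (adjoint J \<circ> J)
                     (adjoint J (B - X (Suc k) - E k) + (1/\<sigma>) *\<^sub>R adjoint J (Y k))"
    and stepE: "\<And>k. E (Suc k) = soft (lam / \<sigma>) (B + J (dth k) - X (Suc k) + (1/\<sigma>) *\<^sub>R Y k)"
    and stepT2: "\<And>k. dt (Suc k) = - inv (adjoint J \<circ> J)
                     (adjoint J (B - X (Suc k) - E (Suc k)) + (1/\<sigma>) *\<^sub>R adjoint J (Y k))"
    and stepY: "\<And>k. Y (Suc k) = Y k + (\<xi> * \<sigma>) *\<^sub>R (B + J (dt (Suc k)) - X (Suc k) - E (Suc k))"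
  shows "sgs_admm J (\<lambda>a. inv (adjoint J \<circ> J) (adjoint J a)) nuc_norm (\<lambda>E. lam * l1_norm E)
           B \<sigma> \<xi> X E Y dt dth"
proof (rule sgs_admm.intro[OF pseudo_inverse_range_projection[OF lin inv]], unfold_locales)
  fix k v
  show "subgradient nuc_norm (X (Suc k)) (Y k + \<sigma> *\<^sub>R (B + J (dt k) - X (Suc k) - E k))"
    by (rule subgradient_svt_step[OF sig stepX])
  show "subgradient (\<lambda>E. lam * l1_norm E) (E (Suc k))
      (Y k + \<sigma> *\<^sub>R (B + J (dth k) - X (Suc k) - E (Suc k)))"
    by (rule subgradient_soft_step[OF lam sig stepE])
  have "(Y k + \<sigma> *\<^sub>R ((B - X (Suc k) - E (Suc k)) + J (dt (Suc k)))) \<bullet> J v = 0"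
    using sig by (intro normal_equation_orthogonal[OF lin inv _ stepT2]) simp
  then show "(Y k + \<sigma> *\<^sub>R (B + J (dt (Suc k)) - X (Suc k) - E (Suc k))) \<bullet> J v = 0"
    by (simp add: algebra_simps)
  have "dth k - dt (Suc k) = inv (adjoint J \<circ> J) (adjoint J (E k - E (Suc k)))"
    using normal_equation_difference[OF lin inv stepT1 stepT2] by (simp add: algebra_simps)
  then show "J (dth k) - J (dt (Suc k)) = J (inv (adjoint J \<circ> J) (adjoint J (E k - E (Suc k))))"
    by (simp add: linear_diff[OF lin, symmetric])
qed (use sig xi stepY continuous_on_nuc_norm continuous_on_mult_left[OF continuous_on_l1_norm] in auto)

theorem theorem3:
  fixes B :: "real^'n^'m" and J :: "real^'p \<Rightarrow> real^'n^'m"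
    and lam \<sigma> \<xi> :: real
    and X E Y :: "nat \<Rightarrow> real^'n^'m" and dt dth :: "nat \<Rightarrow> real^'p"
  assumes lin: "linear J"
    and inv: "bij (adjoint J \<circ> J)"
    and lam: "lam > 0" and sig: "\<sigma> > 0"
    and xi: "0 < \<xi>" "\<xi> < (1 + sqrt 5) / 2"
    and stepX: "\<And>k. X (Suc k) = svt (1/\<sigma>) (B + J (dt k) - E k + (1/\<sigma>) *\<^sub>R Y k)"
    and stepT1: "\<And>k. dth k = - inv (adjoint J \<circ> J)
                     (adjoint J (B - X (Suc k) - E k) + (1/\<sigma>) *\<^sub>R adjoint J (Y k))"
    and stepE: "\<And>k. E (Suc k) = soft (lam / \<sigma>) (B + J (dth k) - X (Suc k) + (1/\<sigma>) *\<^sub>R Y k)"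
    and stepT2: "\<And>k. dt (Suc k) = - inv (adjoint J \<circ> J)
                     (adjoint J (B - X (Suc k) - E (Suc k)) + (1/\<sigma>) *\<^sub>R adjoint J (Y k))"
    and stepY: "\<And>k. Y (Suc k) = Y k + (\<xi> * \<sigma>) *\<^sub>R (B + J (dt (Suc k)) - X (Suc k) - E (Suc k))"
  shows "\<exists>Xb tb Eb Yb. X \<longlonglongrightarrow> Xb \<and> dt \<longlonglongrightarrow> tb \<and> E \<longlonglongrightarrow> Eb \<and> Y \<longlonglongrightarrow> Yb \<and>
           optimal_P B J lam Xb tb Eb"
proof -
  have "sgs_admm J (\<lambda>a. inv (adjoint J \<circ> J) (adjoint J a)) nuc_norm (\<lambda>E. lam * l1_norm E)
      B \<sigma> \<xi> X E Y dt dth"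
    using assms by (rule nuc_l1_iteration_sgs_admm)
  then interpret sgs_admm J "\<lambda>a. inv (adjoint J \<circ> J) (adjoint J a)" nuc_norm "\<lambda>E. lam * l1_norm E"
      B \<sigma> \<xi> X E Y dt dth .
  obtain Xb db Eb Yb where "kkt_point nuc_norm (\<lambda>E. lam * l1_norm E) J B Xb db Eb Yb"
    using nuc_l1_kkt_point_exists[OF range_projection_axioms lam] .
  then obtain Xl dl El Yl where "X \<longlonglongrightarrow> Xl" "dt \<longlonglongrightarrow> dl" "E \<longlonglongrightarrow> El" "Y \<longlonglongrightarrow> Yl"
      "kkt_point nuc_norm (\<lambda>E. lam * l1_norm E) J B Xl dl El Yl"
    by (rule converges_to_kkt_point)
  then show ?thesis using kkt_point_optimal_P[OF lin] by blast
qed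

end
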